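(* Let $\mathcal{F}=(\mu_n,\mathcal{S}_n,K_n,\pi_n)_{n\ge1}$ be a family of irreducible, reversible discrete-time finite Markov chains. Assume that $T_{n,2}(\mu_n,\epsilon_0)\to\infty$ for some $\epsilon_0>0$ or $\tau_n(c)\to\infty$ for some $c>0$, and that $\pi_n(|\mu_nK_n/\pi_n|^2)\to\infty$. Then the following are equivalent: (1) $\mathcal{F}$ has an $L^2$-cutoff; (2) for all $\epsilon,c>0$, $T_{n,2}(\mu_n,\epsilon)\lambda_{n,j_n(c)}\to\infty$; (3) there is $\epsilon>0$ with $T_{n,2}(\mu_n,\epsilon)\lambda_{n,j_n(c)}\to\infty$ for all $c>0$; (4) for all $c>0$, $\tau_n(c)\lambda_{n,j_n(c)}\to\infty$; (5) for all $\tilde c,c>0$, $\tau_n(\tilde c)\lambda_{n,j_n(c)}\to\infty$; (6) there is $\tilde c>0$ with $\tau_n(\tilde c)\lambda_{n,j_n(c)}\to\infty$ for all $c>0$. Moreover, if $\mathcal{F}$ has an $L^2$-cutoff, then $\tau_n(c)$ is an $L^2$-cutoff time for every $c>0$, and \[|T_{n,2}(\mu_n,\epsilon)-T_{n,2}(\mu_n,\delta)|=O\big(\max\{1,1/\lambda_{n,j_n(c)}\}\big)\ \ \forall\epsilon,\delta,c>0,\] \[|T_{n,2}(\mu_n,\epsilon)-\tau_n(c)|=O\big(\max\{1,\sqrt{\tau_n(c)/\lambda_{n,j_n(c)}}\}\big)\ \ \forall\epsilon,c>0.\]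
   Context: For the $n$th chain, $d_{n,2}(\mu_n,m)=\big(\sum_y|\mu_nK_n^m(y)/\pi_n(y)-1|^2\pi_n(y)\big)^{1/2}$ for integers $m\ge0$, $T_{n,2}(\mu_n,\epsilon)=\min\{m\in\mathbb{Z}_{\ge0}:d_{n,2}(\mu_n,m)\le\epsilon\}$, $\pi_n(|\mu_nK_n/\pi_n|^2)=\sum_y(\mu_nK_n(y))^2/\pi_n(y)$. Let $1=\beta_{n,0},\beta_{n,1},\dots,\beta_{n,|\mathcal{S}_n|-1}$ be the eigenvalues of $K_n$ with $|\beta_{n,1}|\ge|\beta_{n,2}|\ge\cdots$ and $L^2(\pi_n)$-orthonormal right eigenvectors $\phi_{n,0}=\mathbf 1,\phi_{n,1},\dots$; set $\lambda_{n,i}=-\log|\beta_{n,i}|$ (with $-\log0=\infty$, $1/\infty=0$); $\mu_n(\phi)=\sum_x\mu_n(x)\phi(x)$. For $c>0$: $j_n(c)=\min\{j\ge1:\sum_{i=1}^j|\mu_n(\phi_{n,i})|^2>c\}$ and $\tau_n(c)=\max_{j\ge j_n(c)}\frac{\log(1+\sum_{i=1}^j|\mu_n(\phi_{n,i})|^2)}{2\lambda_{n,j}}$. $L^2$-cutoff: there is $t_n>0$ with $d_{n,2}(\mu_n,\lceil(1+a)t_n\rceil)\to0$ and $d_{n,2}(\mu_n,\lfloor(1-a)t_n\rfloor)\to\infty$ for all $a\in(0,1)$; $t_n$ is a cutoff time. $a_n=O(b_n)$ means $\sup_na_n/b_n<\infty$. *)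

theory Defs
  imports "HOL-Analysis.Analysis"
begin

text \<open>A finite chain on the state set S with kernel K (only its values on S x S matter).\<close>

primrec kpow :: "'a set \<Rightarrow> ('a \<Rightarrow> 'a \<Rightarrow> real) \<Rightarrow> nat \<Rightarrow> 'a \<Rightarrow> 'a \<Rightarrow> real" where
  "kpow S K 0 x y = (if x = y then 1 else 0)"
| "kpow S K (Suc m) x y = (\<Sum>z\<in>S. kpow S K m x z * K z y)"

definition distK :: "'a set \<Rightarrow> ('a \<Rightarrow> 'a \<Rightarrow> real) \<Rightarrow> ('a \<Rightarrow> real) \<Rightarrow> nat \<Rightarrow> 'a \<Rightarrow> real" where
  "distK S K mu m y = (\<Sum>x\<in>S. mu x * kpow S K m x y)"

definition is_prob :: "'a set \<Rightarrow> ('a \<Rightarrow> real) \<Rightarrow> bool" where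
  "is_prob S p \<longleftrightarrow> (\<forall>x\<in>S. 0 \<le> p x) \<and> (\<Sum>x\<in>S. p x) = 1"

definition stochastic :: "'a set \<Rightarrow> ('a \<Rightarrow> 'a \<Rightarrow> real) \<Rightarrow> bool" where
  "stochastic S K \<longleftrightarrow> (\<forall>x\<in>S. \<forall>y\<in>S. 0 \<le> K x y) \<and> (\<forall>x\<in>S. (\<Sum>y\<in>S. K x y) = 1)"

definition irreducible_chain :: "'a set \<Rightarrow> ('a \<Rightarrow> 'a \<Rightarrow> real) \<Rightarrow> bool" where
  "irreducible_chain S K \<longleftrightarrow> (\<forall>x\<in>S. \<forall>y\<in>S. \<exists>m. 0 < kpow S K m x y)"

definition irred_reversible_chain :: "'a set \<Rightarrow> ('a \<Rightarrow> 'a \<Rightarrow> real) \<Rightarrow> ('a \<Rightarrow> real) \<Rightarrow> bool" where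
  "irred_reversible_chain S K pp \<longleftrightarrow>
     finite S \<and> S \<noteq> {} \<and> stochastic S K \<and> irreducible_chain S K \<and>
     is_prob S pp \<and> (\<forall>x\<in>S. 0 < pp x) \<and>
     (\<forall>x\<in>S. \<forall>y\<in>S. pp x * K x y = pp y * K y x)"

definition ordered_eigenbasis :: "'a set \<Rightarrow> ('a \<Rightarrow> 'a \<Rightarrow> real) \<Rightarrow> ('a \<Rightarrow> real) \<Rightarrow>
    (nat \<Rightarrow> real) \<Rightarrow> (nat \<Rightarrow> 'a \<Rightarrow> real) \<Rightarrow> bool" where
  "ordered_eigenbasis S K pp beta phi \<longleftrightarrow>
     beta 0 = 1 \<and> (\<forall>x\<in>S. phi 0 x = 1) \<and>
     (\<forall>i<card S. \<forall>x\<in>S. (\<Sum>y\<in>S. K x y * phi i y) = beta i * phi i x) \<and>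
     (\<forall>i<card S. \<forall>k<card S. (\<Sum>x\<in>S. phi i x * phi k x * pp x) = (if i = k then 1 else 0)) \<and>
     (\<forall>i. 1 \<le> i \<and> Suc i < card S \<longrightarrow> \<bar>beta (Suc i)\<bar> \<le> \<bar>beta i\<bar>)"

definition d2 :: "'a set \<Rightarrow> ('a \<Rightarrow> 'a \<Rightarrow> real) \<Rightarrow> ('a \<Rightarrow> real) \<Rightarrow> ('a \<Rightarrow> real) \<Rightarrow> nat \<Rightarrow> real" where
  "d2 S K pp mu m = sqrt (\<Sum>y\<in>S. (distK S K mu m y / pp y - 1)\<^sup>2 * pp y)"

definition T2 :: "'a set \<Rightarrow> ('a \<Rightarrow> 'a \<Rightarrow> real) \<Rightarrow> ('a \<Rightarrow> real) \<Rightarrow> ('a \<Rightarrow> real) \<Rightarrow> real \<Rightarrow> ereal" where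
  "T2 S K pp mu eps =
     (if \<exists>m. d2 S K pp mu m \<le> eps then ereal (real (LEAST m. d2 S K pp mu m \<le> eps)) else \<infinity>)"

definition one_step_norm :: "'a set \<Rightarrow> ('a \<Rightarrow> 'a \<Rightarrow> real) \<Rightarrow> ('a \<Rightarrow> real) \<Rightarrow> ('a \<Rightarrow> real) \<Rightarrow> real" where
  "one_step_norm S K pp mu = (\<Sum>y\<in>S. (distK S K mu 1 y)\<^sup>2 / pp y)"

definition eig_rate :: "real \<Rightarrow> ereal" where
  "eig_rate b = (if b = 0 then \<infinity> else ereal (- ln \<bar>b\<bar>))"

definition coef :: "'a set \<Rightarrow> ('a \<Rightarrow> real) \<Rightarrow> ('a \<Rightarrow> real) \<Rightarrow> real" where
  "coef S mu f = (\<Sum>x\<in>S. mu x * f x)"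

definition partial_mass :: "'a set \<Rightarrow> ('a \<Rightarrow> real) \<Rightarrow> (nat \<Rightarrow> 'a \<Rightarrow> real) \<Rightarrow> nat \<Rightarrow> real" where
  "partial_mass S mu phi j = (\<Sum>i\<in>{1..j}. (coef S mu (phi i))\<^sup>2)"

definition jn :: "'a set \<Rightarrow> ('a \<Rightarrow> real) \<Rightarrow> (nat \<Rightarrow> 'a \<Rightarrow> real) \<Rightarrow> real \<Rightarrow> nat" where
  "jn S mu phi c = (LEAST j. 1 \<le> j \<and> j < card S \<and> c < partial_mass S mu phi j)"

text \<open>tau_n(c) = max_{j \<ge> j_n(c)} log(1 + sum_{i\<le>j} |mu(phi_i)|^2) / (2 lambda_j), computed in ereal
  (so x / \<infinity> = 0).\<close>
definition taun :: "'a set \<Rightarrow> (nat \<Rightarrow> real) \<Rightarrow> ('a \<Rightarrow> real) \<Rightarrow> (nat \<Rightarrow> 'a \<Rightarrow> real) \<Rightarrow> real \<Rightarrow> ereal" where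
  "taun S beta mu phi c =
     Max ((\<lambda>j. ereal (ln (1 + partial_mass S mu phi j)) / (2 * eig_rate (beta j)))
            ` {jn S mu phi c..<card S})"

definition cutoff_limits :: "(nat \<Rightarrow> nat \<Rightarrow> real) \<Rightarrow> (nat \<Rightarrow> real) \<Rightarrow> bool" where
  "cutoff_limits d t \<longleftrightarrow>
     (\<forall>a. 0 < a \<and> a < 1 \<longrightarrow>
        ((\<lambda>n. d n (nat \<lceil>(1 + a) * t n\<rceil>)) \<longlonglongrightarrow> 0) \<and>
        filterlim (\<lambda>n. d n (nat \<lfloor>(1 - a) * t n\<rfloor>)) at_top sequentially)"

definition is_cutoff_time :: "(nat \<Rightarrow> nat \<Rightarrow> real) \<Rightarrow> (nat \<Rightarrow> real) \<Rightarrow> bool" where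
  "is_cutoff_time d t \<longleftrightarrow> (\<forall>n. 0 < t n) \<and> cutoff_limits d t"

definition has_L2_cutoff :: "(nat \<Rightarrow> nat \<Rightarrow> real) \<Rightarrow> bool" where
  "has_L2_cutoff d \<longleftrightarrow> (\<exists>t. is_cutoff_time d t)"

definition esqrt :: "ereal \<Rightarrow> ereal" where
  "esqrt x = (if x = \<infinity> then \<infinity> else ereal (sqrt (real_of_ereal x)))"

end

theory Submission
  imports Defs "Jordan_Normal_Form.Determinant"
begin

text \<open>Expanding \<open>\<mu>K\<^sup>m/\<pi> - 1\<close> in the orthonormal eigenbasis, Parseval gives
  \<open>d\<^sub>2(\<mu>, m)\<^sup>2 = (\<Sum>i\<ge>1. \<mu>(\<phi>\<^sub>i)\<^sup>2 \<bar>\<beta>\<^sub>i\<bar>^(2m))\<close>, so everything only depends on the weights \<open>\<mu>(\<phi>\<^sub>i)\<^sup>2\<close>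
  and the moduli \<open>\<bar>\<beta>\<^sub>i\<bar>\<close>. For such a sum \<open>\<tau> = \<tau>(c)\<close> is a sharp threshold: the term attaining the
  maximum in \<open>\<tau>\<close> gives \<open>d\<^sub>2\<^sup>2 \<ge> c/(1+c) exp (2\<lambda>(\<tau> - m))\<close> for \<open>m \<le> \<tau>\<close>, while summation by parts
  against that maximum gives \<open>d\<^sub>2\<^sup>2 \<le> c' + c \<bar>\<beta>\<^sub>j\<^sub>(\<^sub>c\<^sub>')\<bar>^(2m) + m/(m - \<tau>) exp (-2\<lambda>(m - \<tau>))\<close>
  for \<open>m > \<tau>\<close>. The distance therefore drops from large to small within \<open>O(max 1 (1/\<lambda>) + \<surd>(\<tau>/\<lambda>))\<close> of \<open>\<tau>\<close>:
  there is a cutoff exactly when \<open>\<tau> \<lambda> \<rightarrow> \<infinity>\<close>, and then \<open>T\<^sub>2(\<epsilon>)\<close> stays within that window of \<open>\<tau>\<close>.\<close>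

section \<open>Summation by parts\<close>

lemma mult_diff_le_powr_diff:
  fixes x y W r :: real
  assumes "0 \<le> y" "y \<le> x" "0 \<le> W" "0 < x \<Longrightarrow> W \<le> x powr (-r)" "0 \<le> r" "r < 1"
  shows "W * (x - y) \<le> (x powr (1-r) - y powr (1-r)) / (1-r)"
proof (cases "x = 0")
  case True then show ?thesis using assms by simp
next
  case False
  then have x: "0 < x" using assms by simp
  have xx: "x powr (-r) * x = x powr (1-r)"
    using powr_mult_base[of x "-r"] x by (simp add: mult.commute)
  have "W * (x - y) \<le> x powr (-r) * (x - y)" using assms x by (intro mult_right_mono) auto
  also have "\<dots> \<le> (x powr (1-r) - y powr (1-r)) / (1-r)"
  proof (cases "y = 0")
    case True
    have "x powr (1-r) \<le> x powr (1-r) / (1-r)" using assms x by (simp add: le_divide_eq)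
    then show ?thesis using True xx by simp
  next
    case False
    then have y: "0 < y" using assms by simp
    have young: "x powr r * y powr (1-r) \<le> r * x + (1-r) * y"
      using Youngs_inequality_0[of r "1-r" x y] assms x y by simp
    have "y powr (1-r) = x powr (-r) * (x powr r * y powr (1-r))"
      using x by (simp add: powr_add[symmetric])
    also have "\<dots> \<le> x powr (-r) * (r * x + (1-r) * y)" by (intro mult_left_mono young) simp
    also have "\<dots> = r * x powr (1-r) + (1-r) * (x powr (-r) * y)" using xx by (simp add: algebra_simps)
    finally have "(1-r) * (x powr (-r) * (x - y)) \<le> x powr (1-r) - y powr (1-r)"
      using xx by (simp add: algebra_simps)
    then show ?thesis using assms by (simp add: le_divide_eq mult.commute)
  qed
  finally show ?thesis .
qed

text \<open>Summation by parts turns the sum into \<open>\<Sum> W\<^sub>i (x\<^sub>i - x\<^sub>i\<^sub>+\<^sub>1)\<close> with partial sums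
  \<open>W\<^sub>i = A + \<Sum>\<^sub>j\<^sub>\<le>\<^sub>i w\<^sub>j \<le> x\<^sub>i\<^sup>-\<^sup>r\<close>: a lower Riemann sum for \<open>\<integral>\<^sub>0\<^sup>x\<^sup>a s\<^sup>-\<^sup>r ds = x\<^sub>a\<^sup>1\<^sup>-\<^sup>r / (1 - r)\<close>.\<close>

lemma abel_sum_le_powr:
  fixes x w :: "nat \<Rightarrow> real"
  assumes ak: "a \<le> k" and x_nonneg: "\<And>i. a \<le> i \<Longrightarrow> i \<le> k \<Longrightarrow> 0 \<le> x i"
    and x_decr: "\<And>i. a \<le> i \<Longrightarrow> i < k \<Longrightarrow> x (Suc i) \<le> x i"
    and w_nonneg: "\<And>i. a \<le> i \<Longrightarrow> i \<le> k \<Longrightarrow> 0 \<le> w i" and A: "0 \<le> A" and r: "0 \<le> r" "r < 1"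
    and partial: "\<And>i. a \<le> i \<Longrightarrow> i \<le> k \<Longrightarrow> 0 < x i \<Longrightarrow> A + (\<Sum>j\<in>{a..i}. w j) \<le> x i powr (-r)"
  shows "(\<Sum>i\<in>{a..k}. w i * x i) \<le> x a powr (1-r) / (1-r)"
proof -
  define G where "G y = y powr (1-r) / (1-r)" for y
  define P where "P i = A + (\<Sum>j\<in>{a..i}. w j)" for i
  have P_nonneg: "0 \<le> P i" if "a \<le> i" "i \<le> k" for i
    unfolding P_def using that A w_nonneg by (intro add_nonneg_nonneg sum_nonneg) auto
  have invariant: "(\<Sum>i\<in>{a..k'}. w i * x i) + G (x k') - P k' * x k' \<le> G (x a)"
    if "a \<le> k'" "k' \<le> k" for k'
    using that
  proof (induction k' rule: dec_induct)
    case base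
    then show ?case using A x_nonneg ak by (simp add: P_def algebra_simps)
  next
    case (step m)
    then have m: "a \<le> m" "m < k" by auto
    have "P m * (x m - x (Suc m)) \<le> G (x m) - G (x (Suc m))"
      unfolding G_def diff_divide_distrib[symmetric]
      by (rule mult_diff_le_powr_diff) (use m x_nonneg x_decr P_nonneg partial r in \<open>auto simp: P_def\<close>)
    moreover have "P (Suc m) = P m + w (Suc m)" unfolding P_def using m by simp
    moreover have "(\<Sum>i\<in>{a..Suc m}. w i * x i) = (\<Sum>i\<in>{a..m}. w i * x i) + w (Suc m) * x (Suc m)"
      using m by simp
    ultimately show ?case using step.IH m by (simp add: algebra_simps)
  qed
  have "P k * x k \<le> G (x k)"
  proof (cases "x k = 0")
    case True then show ?thesis by (simp add: G_def)
  next
    case False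
    then have xk: "0 < x k" using x_nonneg[OF ak] by simp
    have "P k * x k \<le> x k powr (-r) * x k" using partial[OF ak _ xk] xk by (simp add: P_def)
    also have "\<dots> = x k powr (1-r)" using powr_mult_base[of "x k" "-r"] xk by (simp add: mult.commute)
    also have "\<dots> \<le> G (x k)"
      unfolding G_def using r mult_left_le[of "1-r" "x k powr (1-r)"] by (simp add: le_divide_eq)
    finally show ?thesis .
  qed
  then show ?thesis using invariant[OF ak order_refl] unfolding G_def by simp
qed

section \<open>Spectral profiles\<close>

text \<open>The \<open>L\<^sup>2\<close> distance of a reversible chain only depends on its spectral profile: writing
  \<open>b i = \<bar>\<beta>\<^sub>i\<bar>\<close> and \<open>w i = \<mu>(\<phi>\<^sub>i)\<^sup>2\<close> for \<open>1 \<le> i < N\<close>, Parseval gives \<open>d\<^sub>2(\<mu>, m)\<^sup>2 = dist_sq N b w m\<close>,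
  \<open>mass w j\<close> is \<open>\<Sum>\<^sub>i\<^sub>=\<^sub>1\<^sup>j \<mu>(\<phi>\<^sub>i)\<^sup>2\<close>, \<open>cut_index\<close> is \<open>j\<^sub>n(c)\<close>, and \<open>cut_time\<close>, \<open>cut_rate\<close>
  are the real-valued versions of \<open>\<tau>\<^sub>n(c)\<close> and \<open>\<lambda>\<^sub>n\<^sub>,\<^sub>j\<^sub>n\<^sub>(\<^sub>c\<^sub>)\<close>.\<close>

definition dist_sq :: "nat \<Rightarrow> (nat \<Rightarrow> real) \<Rightarrow> (nat \<Rightarrow> real) \<Rightarrow> nat \<Rightarrow> real" where
  "dist_sq N b w m = (\<Sum>i\<in>{1..<N}. w i * b i ^ (2*m))"

definition mix_index :: "nat \<Rightarrow> (nat \<Rightarrow> real) \<Rightarrow> (nat \<Rightarrow> real) \<Rightarrow> real \<Rightarrow> nat" where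
  "mix_index N b w e = (LEAST m. sqrt (dist_sq N b w m) \<le> e)"

definition mass :: "(nat \<Rightarrow> real) \<Rightarrow> nat \<Rightarrow> real" where
  "mass w j = (\<Sum>i\<in>{1..j}. w i)"

definition has_cut_index :: "nat \<Rightarrow> (nat \<Rightarrow> real) \<Rightarrow> real \<Rightarrow> bool" where
  "has_cut_index N w c \<longleftrightarrow> (\<exists>j. 1 \<le> j \<and> j < N \<and> c < mass w j)"

definition cut_index :: "nat \<Rightarrow> (nat \<Rightarrow> real) \<Rightarrow> real \<Rightarrow> nat" where
  "cut_index N w c = (LEAST j. 1 \<le> j \<and> j < N \<and> c < mass w j)"

definition tau_term :: "(nat \<Rightarrow> real) \<Rightarrow> (nat \<Rightarrow> real) \<Rightarrow> nat \<Rightarrow> real" where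
  "tau_term b w j = (if b j = 0 then 0 else ln (1 + mass w j) / (2 * (- ln (b j))))"

definition cut_time :: "nat \<Rightarrow> (nat \<Rightarrow> real) \<Rightarrow> (nat \<Rightarrow> real) \<Rightarrow> real \<Rightarrow> real" where
  "cut_time N b w c = Max (tau_term b w ` {cut_index N w c..<N})"

definition cut_rate :: "nat \<Rightarrow> (nat \<Rightarrow> real) \<Rightarrow> (nat \<Rightarrow> real) \<Rightarrow> real \<Rightarrow> real" where
  "cut_rate N b w c = - ln (b (cut_index N w c))"

definition nondegenerate :: "nat \<Rightarrow> (nat \<Rightarrow> real) \<Rightarrow> (nat \<Rightarrow> real) \<Rightarrow> real \<Rightarrow> bool" where
  "nondegenerate N b w c \<longleftrightarrow>
     has_cut_index N w c \<and> 0 < b (cut_index N w c) \<and> b (cut_index N w c) < 1"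

definition mixing_time :: "nat \<Rightarrow> (nat \<Rightarrow> real) \<Rightarrow> (nat \<Rightarrow> real) \<Rightarrow> real \<Rightarrow> ereal" where
  "mixing_time N b w e =
     (if \<exists>m. sqrt (dist_sq N b w m) \<le> e then ereal (real (mix_index N b w e)) else \<infinity>)"

definition ecut_time :: "nat \<Rightarrow> (nat \<Rightarrow> real) \<Rightarrow> (nat \<Rightarrow> real) \<Rightarrow> real \<Rightarrow> ereal" where
  "ecut_time N b w c =
     Max ((\<lambda>j. ereal (ln (1 + mass w j)) / (2 * eig_rate (b j))) ` {cut_index N w c..<N})"

definition ecut_rate :: "nat \<Rightarrow> (nat \<Rightarrow> real) \<Rightarrow> (nat \<Rightarrow> real) \<Rightarrow> real \<Rightarrow> ereal" where
  "ecut_rate N b w c = eig_rate (b (cut_index N w c))"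

lemma cut_index_spec:
  assumes "has_cut_index N w c" "0 \<le> c"
  shows "1 \<le> cut_index N w c" "cut_index N w c < N" "c < mass w (cut_index N w c)"
    "mass w (cut_index N w c - 1) \<le> c"
proof -
  obtain j where j: "1 \<le> j \<and> j < N \<and> c < mass w j" using assms unfolding has_cut_index_def by blast
  have L: "1 \<le> cut_index N w c \<and> cut_index N w c < N \<and> c < mass w (cut_index N w c)"
    unfolding cut_index_def by (rule LeastI[of _ j]) (use j in auto)
  then show "1 \<le> cut_index N w c" "cut_index N w c < N" "c < mass w (cut_index N w c)" by auto
  show "mass w (cut_index N w c - 1) \<le> c"
  proof (cases "cut_index N w c = 1")
    case True then show ?thesis using assms by (simp add: mass_def)
  next
    case False
    have "cut_index N w c - 1 < cut_index N w c" using L by auto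
    from not_less_Least[OF this[unfolded cut_index_def]]
    show ?thesis using L False by (auto simp: cut_index_def)
  qed
qed

lemma cut_index_mono:
  assumes "has_cut_index N w c" "0 < c1" "c1 \<le> c"
  shows "has_cut_index N w c1" "cut_index N w c1 \<le> cut_index N w c"
proof -
  have "1 \<le> cut_index N w c \<and> cut_index N w c < N \<and> c1 < mass w (cut_index N w c)"
    using cut_index_spec[OF assms(1)] assms by auto
  then show "has_cut_index N w c1" "cut_index N w c1 \<le> cut_index N w c"
    unfolding has_cut_index_def cut_index_def[of N w c1] by (auto intro: Least_le)
qed

lemma tau_term_le_cut_time:
  "j \<in> {cut_index N w c..<N} \<Longrightarrow> tau_term b w j \<le> cut_time N b w c"
  unfolding cut_time_def by (rule Max_ge) auto

lemma cut_time_attained: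
  assumes "has_cut_index N w c" "0 \<le> c"
  obtains j where "j \<in> {cut_index N w c..<N}" "tau_term b w j = cut_time N b w c"
proof -
  have "{cut_index N w c..<N} \<noteq> {}" using cut_index_spec[OF assms] by auto
  then have "Max (tau_term b w ` {cut_index N w c..<N}) \<in> tau_term b w ` {cut_index N w c..<N}"
    by (intro Max_in) auto
  then obtain j where "j \<in> {cut_index N w c..<N}" "tau_term b w j = cut_time N b w c"
    unfolding cut_time_def by (metis imageE)
  then show ?thesis by (rule that)
qed

lemma cut_rate_pos: "nondegenerate N b w c \<Longrightarrow> 0 < cut_rate N b w c"
  unfolding nondegenerate_def cut_rate_def by simp

lemma cut_modulus_pow:
  assumes "nondegenerate N b w c"
  shows "b (cut_index N w c) ^ (2*m) = exp (- 2 * cut_rate N b w c * m)"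
proof -
  have "0 < b (cut_index N w c)" using assms by (simp add: nondegenerate_def)
  then have "exp (real (2*m) * ln (b (cut_index N w c))) = b (cut_index N w c) ^ (2*m)"
    by (subst exp_of_nat_mult) simp
  then show ?thesis by (simp add: cut_rate_def algebra_simps)
qed

locale spectral_profile =
  fixes N :: nat and b w :: "nat \<Rightarrow> real"
  assumes weight_nonneg: "1 \<le> i \<Longrightarrow> i < N \<Longrightarrow> 0 \<le> w i"
    and modulus_nonneg: "1 \<le> i \<Longrightarrow> i < N \<Longrightarrow> 0 \<le> b i"
    and modulus_le_1: "1 \<le> i \<Longrightarrow> i < N \<Longrightarrow> b i \<le> 1"
    and modulus_decreasing: "1 \<le> i \<Longrightarrow> Suc i < N \<Longrightarrow> b (Suc i) \<le> b i"
begin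

lemma modulus_antimono:
  assumes "1 \<le> i" "i \<le> k" "k < N" shows "b k \<le> b i"
  using assms(2,3)
proof (induction k rule: dec_induct)
  case (step k)
  then show ?case using modulus_decreasing[of k] assms(1) by simp
qed simp

lemma modulus_pow_le_1: "1 \<le> i \<Longrightarrow> i < N \<Longrightarrow> b i ^ k \<le> 1"
  by (simp add: modulus_le_1 modulus_nonneg power_le_one)

lemma term_nonneg: "1 \<le> i \<Longrightarrow> i < N \<Longrightarrow> 0 \<le> w i * b i ^ k"
  by (simp add: modulus_nonneg weight_nonneg)

lemma mass_nonneg: "k < N \<Longrightarrow> 0 \<le> mass w k"
  unfolding mass_def by (auto intro!: sum_nonneg weight_nonneg)

lemma mass_mono:
  assumes "j \<le> k" "k < N" shows "mass w j \<le> mass w k"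
  unfolding mass_def using assms by (intro sum_mono2) (auto intro: weight_nonneg)

lemma mass_split:
  assumes "1 \<le> j" "j \<le> i" shows "mass w (j - 1) + (\<Sum>l\<in>{j..i}. w l) = mass w i"
proof -
  have "{1..i} = {1..j - 1} \<union> {j..i}" "{1..j - 1} \<inter> {j..i} = {}" using assms by auto
  then show ?thesis unfolding mass_def by (simp add: sum.union_disjoint)
qed

lemma dist_sq_nonneg: "0 \<le> dist_sq N b w m"
  unfolding dist_sq_def by (auto intro!: sum_nonneg term_nonneg)

lemma dist_sq_antimono:
  assumes "m \<le> m'" shows "dist_sq N b w m' \<le> dist_sq N b w m"
  unfolding dist_sq_def
proof (rule sum_mono)
  fix i assume i: "i \<in> {1..<N}"
  have "b i ^ (2*m') \<le> b i ^ (2*m)"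
    by (rule power_decreasing) (use assms i in \<open>auto intro: modulus_nonneg modulus_le_1\<close>)
  then show "w i * b i ^ (2*m') \<le> w i * b i ^ (2*m)"
    using i by (auto intro!: mult_left_mono weight_nonneg)
qed

lemma sqrt_dist_sq_le_iff: "0 \<le> e \<Longrightarrow> sqrt (dist_sq N b w m) \<le> e \<longleftrightarrow> dist_sq N b w m \<le> e\<^sup>2"
  using dist_sq_nonneg by (metis abs_of_nonneg real_sqrt_abs real_sqrt_le_iff)

lemma mix_index_le: "dist_sq N b w m \<le> e\<^sup>2 \<Longrightarrow> 0 \<le> e \<Longrightarrow> mix_index N b w e \<le> m"
  unfolding mix_index_def by (rule Least_le) (simp add: sqrt_dist_sq_le_iff)

lemma dist_sq_mix_index:
  "dist_sq N b w m \<le> e\<^sup>2 \<Longrightarrow> 0 \<le> e \<Longrightarrow> dist_sq N b w (mix_index N b w e) \<le> e\<^sup>2"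
  using LeastI[of "\<lambda>m. sqrt (dist_sq N b w m) \<le> e" m] by (simp add: mix_index_def sqrt_dist_sq_le_iff)

lemma less_mix_index:
  assumes "e\<^sup>2 < dist_sq N b w m" "dist_sq N b w m' \<le> e\<^sup>2" "0 \<le> e"
  shows "m < mix_index N b w e"
proof (rule ccontr)
  assume "\<not> m < mix_index N b w e"
  then have "dist_sq N b w m \<le> dist_sq N b w (mix_index N b w e)" by (simp add: dist_sq_antimono)
  then show False using dist_sq_mix_index[OF assms(2,3)] assms(1) by simp
qed

lemma mix_index_antimono:
  assumes "dist_sq N b w m \<le> d\<^sup>2" "0 \<le> d" "d \<le> e"
  shows "mix_index N b w e \<le> mix_index N b w d"
proof -
  have "dist_sq N b w (mix_index N b w d) \<le> d\<^sup>2" using dist_sq_mix_index[OF assms(1,2)] .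
  also have "d\<^sup>2 \<le> e\<^sup>2" using assms by (simp add: power_mono)
  finally show ?thesis using assms by (intro mix_index_le) auto
qed

lemma mass_mult_le_dist_sq:
  assumes "1 \<le> j" "j < N" shows "mass w j * b j ^ (2*m) \<le> dist_sq N b w m"
proof -
  have "mass w j * b j ^ (2*m) = (\<Sum>i\<in>{1..j}. w i * b j ^ (2*m))"
    unfolding mass_def by (simp add: sum_distrib_right)
  also have "\<dots> \<le> (\<Sum>i\<in>{1..j}. w i * b i ^ (2*m))"
    using assms by (intro sum_mono mult_left_mono power_mono)
      (auto intro: modulus_antimono modulus_nonneg weight_nonneg)
  also have "\<dots> \<le> dist_sq N b w m" unfolding dist_sq_def
    using assms by (intro sum_mono2) (auto intro!: term_nonneg)
  finally show ?thesis .
qed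

lemma cut_mult_le_dist_sq:
  assumes "has_cut_index N w c" "0 \<le> c"
  shows "c * b (cut_index N w c) ^ (2*m) \<le> dist_sq N b w m"
proof -
  note J = cut_index_spec[OF assms]
  have "c * b (cut_index N w c) ^ (2*m) \<le> mass w (cut_index N w c) * b (cut_index N w c) ^ (2*m)"
    using J by (intro mult_right_mono) (auto intro!: zero_le_power modulus_nonneg)
  also have "\<dots> \<le> dist_sq N b w m" using mass_mult_le_dist_sq J by auto
  finally show ?thesis .
qed

lemma dist_sq_split_le:
  assumes "1 \<le> J1" "J1 \<le> J" "J < N"
  shows "dist_sq N b w m \<le> mass w (J1 - 1) + mass w (J - 1) * b J1 ^ (2*m)
           + (\<Sum>i\<in>{J..<N}. w i * b i ^ (2*m))"
proof -
  have "dist_sq N b w m = (\<Sum>i\<in>{1..<J1}. w i * b i ^ (2*m)) + (\<Sum>i\<in>{J1..<J}. w i * b i ^ (2*m))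
      + (\<Sum>i\<in>{J..<N}. w i * b i ^ (2*m))"
    unfolding dist_sq_def using assms by (simp add: sum.atLeastLessThan_concat)
  moreover have "(\<Sum>i\<in>{1..<J1}. w i * b i ^ (2*m)) \<le> mass w (J1 - 1)"
  proof -
    have "(\<Sum>i\<in>{1..<J1}. w i * b i ^ (2*m)) \<le> (\<Sum>i\<in>{1..<J1}. w i)"
      using assms by (intro sum_mono mult_left_le) (auto intro: weight_nonneg modulus_pow_le_1)
    moreover have "{1..<J1} = {1..J1 - 1}" using assms by auto
    ultimately show ?thesis unfolding mass_def by simp
  qed
  moreover have "(\<Sum>i\<in>{J1..<J}. w i * b i ^ (2*m)) \<le> mass w (J - 1) * b J1 ^ (2*m)"
  proof -
    have "(\<Sum>i\<in>{J1..<J}. w i * b i ^ (2*m)) \<le> (\<Sum>i\<in>{J1..<J}. w i * b J1 ^ (2*m))"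
      using assms by (intro sum_mono mult_left_mono power_mono)
        (auto intro: modulus_antimono modulus_nonneg weight_nonneg)
    also have "\<dots> = (\<Sum>i\<in>{J1..<J}. w i) * b J1 ^ (2*m)" by (simp add: sum_distrib_right)
    also have "\<dots> \<le> mass w (J - 1) * b J1 ^ (2*m)"
      unfolding mass_def using assms
      by (intro mult_right_mono sum_mono2) (auto intro: weight_nonneg modulus_nonneg)
    finally show ?thesis .
  qed
  ultimately show ?thesis by linarith
qed

lemma tail_shift_le:
  assumes "1 \<le> J"
  shows "(\<Sum>i\<in>{J..<N}. w i * b i ^ (2*(m+k))) \<le> b J ^ (2*k) * dist_sq N b w m"
proof (cases "J < N")
  case False then show ?thesis using dist_sq_nonneg assms by simp
next
  case True
  have "(\<Sum>i\<in>{J..<N}. w i * b i ^ (2*(m+k))) \<le> (\<Sum>i\<in>{J..<N}. b J ^ (2*k) * (w i * b i ^ (2*m)))"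
  proof (rule sum_mono)
    fix i assume i: "i \<in> {J..<N}"
    have "b i ^ (2*k) \<le> b J ^ (2*k)"
      using assms i by (auto intro!: power_mono modulus_nonneg modulus_antimono)
    then have "w i * b i ^ (2*m) * b i ^ (2*k) \<le> w i * b i ^ (2*m) * b J ^ (2*k)"
      using assms i by (intro mult_left_mono) (auto intro!: term_nonneg)
    then show "w i * b i ^ (2*(m+k)) \<le> b J ^ (2*k) * (w i * b i ^ (2*m))"
      by (simp add: power_add algebra_simps)
  qed
  also have "\<dots> \<le> b J ^ (2*k) * dist_sq N b w m"
    unfolding dist_sq_def sum_distrib_left[symmetric] using assms True
    by (intro mult_left_mono sum_mono2) (auto intro!: term_nonneg modulus_nonneg)
  finally show ?thesis .
qed

lemma tau_term_nonneg:
  assumes "j < N" shows "0 \<le> tau_term b w j"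
proof (cases "j = 0")
  case True then show ?thesis by (simp add: tau_term_def mass_def)
next
  case False
  then have "0 \<le> b j" "b j \<le> 1" using assms modulus_nonneg modulus_le_1 by auto
  then have "b j \<noteq> 0 \<Longrightarrow> ln (b j) \<le> 0" by simp
  then show ?thesis using mass_nonneg[OF assms] by (simp add: tau_term_def divide_nonneg_nonpos)
qed

lemma cut_time_nonneg:
  assumes "has_cut_index N w c" "0 \<le> c" shows "0 \<le> cut_time N b w c"
proof -
  obtain j where "j \<in> {cut_index N w c..<N}" "tau_term b w j = cut_time N b w c"
    using cut_time_attained[OF assms] .
  then show ?thesis using tau_term_nonneg[of j] by auto
qed

lemma exp_tau_term:
  assumes "j < N" "0 < b j" "b j < 1"
  shows "exp (2 * (- ln (b j)) * tau_term b w j) = 1 + mass w j"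
  using assms mass_nonneg[OF assms(1)] by (simp add: tau_term_def add_pos_nonneg)

lemma cut_time_antimono:
  assumes "has_cut_index N w c" "0 < c1" "c1 \<le> c"
  shows "cut_time N b w c \<le> cut_time N b w c1"
proof -
  note JM = cut_index_mono[OF assms]
  show ?thesis unfolding cut_time_def
    by (rule Max_mono)
      (use JM cut_index_spec[OF assms(1)] cut_index_spec[OF JM(1)] assms in auto)
qed

section \<open>Bounds on the distance around the cut time\<close>

lemma nondegenerate_mono:
  assumes "nondegenerate N b w c" "has_cut_index N w ct" "0 < b (cut_index N w ct)" "0 < c" "c \<le> ct"
  shows "nondegenerate N b w ct" "cut_rate N b w c \<le> cut_rate N b w ct"
proof -
  have jc: "has_cut_index N w c" using assms(1) by (simp add: nondegenerate_def)
  have "1 \<le> cut_index N w c" "cut_index N w c \<le> cut_index N w ct" "cut_index N w ct < N"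
    using cut_index_mono[OF assms(2,4,5)] cut_index_spec[OF jc] cut_index_spec[of N w ct] assms(2,4,5)
    by auto
  then have "b (cut_index N w ct) \<le> b (cut_index N w c)"
    by (rule modulus_antimono)
  then show "nondegenerate N b w ct" "cut_rate N b w c \<le> cut_rate N b w ct"
    using assms by (simp_all add: nondegenerate_def cut_rate_def)
qed

text \<open>Below the cut time: the eigenvalue attaining the maximum in \<open>cut_time\<close> alone keeps the
  distance large.\<close>

lemma dist_sq_lower_bound:
  assumes nd: "nondegenerate N b w c" and c: "0 < c" and m: "real m \<le> cut_time N b w c"
  shows "c / (1 + c) * exp (2 * cut_rate N b w c * (cut_time N b w c - m)) \<le> dist_sq N b w m"
proof -
  define t where "t = cut_time N b w c"
  have jex: "has_cut_index N w c" using nd by (simp add: nondegenerate_def)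
  note J = cut_index_spec[OF jex less_imp_le[OF c]]
  obtain j where j: "j \<in> {cut_index N w c..<N}" "tau_term b w j = t"
    using cut_time_attained[OF jex less_imp_le[OF c]] unfolding t_def .
  have j1: "1 \<le> j" "j < N" using j J by auto
  have bj: "b j \<le> b (cut_index N w c)" using modulus_antimono J j by auto
  have W: "c < mass w j" using J mass_mono[of "cut_index N w c" j] j by auto
  show ?thesis
  proof (cases "b j = 0")
    case True
    then have "t = 0" "m = 0" using j m by (auto simp: tau_term_def t_def)
    moreover have "c \<le> dist_sq N b w 0" using cut_mult_le_dist_sq[OF jex, of 0] c by simp
    moreover have "c / (1 + c) \<le> c" using c by (simp add: divide_le_eq)
    ultimately show ?thesis by (simp add: t_def)
  next
    case False
    then have bj0: "0 < b j" using modulus_nonneg[OF j1] by simp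
    have bj1: "b j < 1" using bj nd by (simp add: nondegenerate_def)
    define l where "l = - ln (b j)"
    have rate_le: "cut_rate N b w c \<le> l" unfolding l_def cut_rate_def using bj bj0 by simp
    have exp_t: "exp (2 * l * t) = 1 + mass w j"
      using exp_tau_term[OF j1(2) bj0 bj1] j by (simp add: l_def)
    have pow: "b j ^ (2*m) = exp (- 2 * l * m)"
      using bj0 exp_of_nat_mult[of "2*m" "ln (b j)"] by (simp add: l_def algebra_simps)
    have "c / (1 + c) \<le> mass w j / (1 + mass w j)" using W c by (simp add: field_simps)
    moreover have "exp (2 * cut_rate N b w c * (t - m)) \<le> exp (2 * l * (t - m))"
      using rate_le m by (simp add: mult_right_mono t_def)
    ultimately have "c / (1 + c) * exp (2 * cut_rate N b w c * (t - m))
        \<le> mass w j / (1 + mass w j) * exp (2 * l * (t - m))"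
      using W c by (intro mult_mono) auto
    also have "\<dots> = mass w j * exp (- 2 * l * m)"
      using W c by (simp add: exp_diff exp_t[symmetric] algebra_simps exp_minus field_simps)
    also have "\<dots> \<le> dist_sq N b w m" using mass_mult_le_dist_sq[OF j1, of m] pow by simp
    finally show ?thesis by (simp add: t_def)
  qed
qed

lemma one_plus_mass_le_powr:
  assumes nd: "nondegenerate N b w c" and c: "0 < c" and i: "i \<in> {cut_index N w c..<N}"
    and bi: "0 < b i" and m: "0 < m"
  shows "1 + mass w i \<le> (b i ^ (2*m)) powr (- (cut_time N b w c / m))"
proof -
  have jex: "has_cut_index N w c" using nd by (simp add: nondegenerate_def)
  note J = cut_index_spec[OF jex less_imp_le[OF c]]
  have i1: "1 \<le> i" "i < N" using i J by auto
  have "b i < 1"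
    using modulus_antimono[of "cut_index N w c" i] i1 i J nd by (simp add: nondegenerate_def)
  then have l: "0 < - ln (b i)" using bi by simp
  have "1 + mass w i = exp (2 * (- ln (b i)) * tau_term b w i)"
    using exp_tau_term i1 bi \<open>b i < 1\<close> by simp
  also have "\<dots> \<le> exp (2 * (- ln (b i)) * cut_time N b w c)"
    using tau_term_le_cut_time[OF i] l by simp
  also have "\<dots> = (b i ^ (2*m)) powr (- (cut_time N b w c / m))"
    using bi m by (simp add: powr_def ln_realpow field_simps)
  finally show ?thesis .
qed

text \<open>Above the cut time, the tail of \<open>dist_sq\<close> is controlled by Abel summation, with the exponent
  \<open>r = \<tau> / m\<close>; this is where the maximum over all \<open>j \<ge> j\<^sub>n(c)\<close> in the definition of \<open>\<tau>\<close> is used.\<close>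

lemma tail_upper_bound:
  assumes nd: "nondegenerate N b w c" and c: "0 < c" and m: "cut_time N b w c < real m"
  shows "(\<Sum>i\<in>{cut_index N w c..<N}. w i * b i ^ (2*m))
           \<le> m / (m - cut_time N b w c) * exp (- 2 * cut_rate N b w c * (m - cut_time N b w c))"
proof -
  define t where "t = cut_time N b w c"
  define J where "J = cut_index N w c"
  have jex: "has_cut_index N w c" using nd by (simp add: nondegenerate_def)
  note JJ = cut_index_spec[OF jex less_imp_le[OF c], folded J_def]
  have t0: "0 \<le> t" unfolding t_def using cut_time_nonneg[OF jex] c by simp
  have m0: "0 < real m" using t0 m t_def by linarith
  define r where "r = t / m"
  have r: "0 \<le> r" "r < 1" unfolding r_def using t0 m0 m t_def by (auto simp: divide_less_eq)
  have bJ: "0 < b J" "b J < 1" using nd by (auto simp: nondegenerate_def J_def)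
  have "(\<Sum>i\<in>{J..N-1}. w i * b i ^ (2*m)) \<le> (b J ^ (2*m)) powr (1-r) / (1-r)"
  proof (rule abel_sum_le_powr[where A = "mass w (J - 1)"])
    fix i assume i: "J \<le> i" "i \<le> N - 1" and pos: "0 < b i ^ (2 * m)"
    have "b i \<noteq> 0" using pos m0 by (auto simp: zero_power)
    then have "0 < b i" using modulus_nonneg[of i] i JJ by force
    then have "1 + mass w i \<le> (b i ^ (2*m)) powr (-r)"
      using one_plus_mass_le_powr[OF nd c] i JJ m0 by (simp add: r_def t_def J_def)
    then show "mass w (J - 1) + (\<Sum>j\<in>{J..i}. w j) \<le> (b i ^ (2 * m)) powr (-r)"
      using mass_split[of J i] i JJ by simp
  next
    fix i assume "J \<le> i" "i < N - 1"
    then show "b (Suc i) ^ (2 * m) \<le> b i ^ (2 * m)"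
      using JJ by (intro power_mono modulus_decreasing modulus_nonneg) auto
  qed (use JJ r in \<open>auto intro: weight_nonneg modulus_nonneg mass_nonneg\<close>)
  moreover have "{J..N-1} = {J..<N}" using JJ by auto
  moreover have "(b J ^ (2*m)) powr (1-r) / (1-r)
      = m / (m - t) * exp (- 2 * cut_rate N b w c * (m - t))"
  proof -
    have "(b J ^ (2*m)) powr (1-r) = exp (- 2 * cut_rate N b w c * (m - t))"
      using bJ m0 by (simp add: powr_def ln_realpow cut_rate_def J_def r_def field_simps)
    moreover have "1 / (1 - r) = m / (m - t)" unfolding r_def
      using m0 m t_def by (simp add: field_simps)
    ultimately show ?thesis by (metis times_divide_eq_left mult.commute mult_1)
  qed
  ultimately show ?thesis by (simp add: t_def J_def)
qed

lemma dist_sq_upper_bound: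
  assumes nd: "nondegenerate N b w c" and c1: "0 < c1" "c1 \<le> c" and m: "cut_time N b w c < real m"
  shows "dist_sq N b w m \<le> c1 + c * b (cut_index N w c1) ^ (2*m)
           + m / (m - cut_time N b w c) * exp (- 2 * cut_rate N b w c * (m - cut_time N b w c))"
proof -
  have jex: "has_cut_index N w c" using nd by (simp add: nondegenerate_def)
  note JM = cut_index_mono[OF jex c1]
  have c0: "0 \<le> c" "0 \<le> c1" using c1 by auto
  note J = cut_index_spec[OF jex c0(1)] and J1 = cut_index_spec[OF JM(1) c0(2)]
  have "dist_sq N b w m \<le> mass w (cut_index N w c1 - 1)
      + mass w (cut_index N w c - 1) * b (cut_index N w c1) ^ (2*m)
      + (\<Sum>i\<in>{cut_index N w c..<N}. w i * b i ^ (2*m))"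
    by (rule dist_sq_split_le) (use J J1 JM c1 in auto)
  moreover have "mass w (cut_index N w c - 1) * b (cut_index N w c1) ^ (2*m)
      \<le> c * b (cut_index N w c1) ^ (2*m)"
    using J J1 c1 by (intro mult_right_mono) (auto intro: modulus_nonneg)
  ultimately show ?thesis using tail_upper_bound[OF nd _ m] J1 c1 by fastforce
qed

lemma dist_sq_shift_le:
  assumes jex: "has_cut_index N w c" and c1: "0 < c1" "c1 \<le> c"
  shows "dist_sq N b w (m + k)
           \<le> c1 + c * b (cut_index N w c1) ^ (2*m) + b (cut_index N w c) ^ (2*k) * dist_sq N b w m"
proof -
  note JM = cut_index_mono[OF jex c1]
  have c0: "0 \<le> c" "0 \<le> c1" using c1 by auto
  note J = cut_index_spec[OF jex c0(1)] and J1 = cut_index_spec[OF JM(1) c0(2)]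
  have "dist_sq N b w (m+k) \<le> mass w (cut_index N w c1 - 1)
      + mass w (cut_index N w c - 1) * b (cut_index N w c1) ^ (2*(m+k))
      + (\<Sum>i\<in>{cut_index N w c..<N}. w i * b i ^ (2*(m+k)))"
    by (rule dist_sq_split_le) (use J J1 JM c1 in auto)
  moreover have "mass w (cut_index N w c - 1) * b (cut_index N w c1) ^ (2*(m+k))
      \<le> c * b (cut_index N w c1) ^ (2*m)"
  proof (rule mult_mono)
    show "b (cut_index N w c1) ^ (2*(m+k)) \<le> b (cut_index N w c1) ^ (2*m)"
      using J1 c1 by (intro power_decreasing) (auto intro: modulus_nonneg modulus_le_1)
  qed (use J J1 c1 in \<open>auto intro!: zero_le_power modulus_nonneg\<close>)
  moreover have "(\<Sum>i\<in>{cut_index N w c..<N}. w i * b i ^ (2*(m+k)))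
      \<le> b (cut_index N w c) ^ (2*k) * dist_sq N b w m"
    by (rule tail_shift_le) (use J c1 in auto)
  ultimately show ?thesis using J1 c1 by fastforce
qed

text \<open>Once \<open>\<tau>(c\<^sub>1)\<close> exceeds \<open>ln (1 + c) / (2 \<lambda>(c\<^sub>1))\<close>, the indices below \<open>j(c)\<close> cannot attain the
  maximum defining \<open>\<tau>(c\<^sub>1)\<close>, so \<open>\<tau>(c\<^sub>1) = \<tau>(c)\<close>.\<close>

lemma cut_time_eq_of_gt:
  assumes jex: "has_cut_index N w c" and c1: "0 < c1" "c1 \<le> c" and nd1: "nondegenerate N b w c1"
    and big: "ln (1 + c) / (2 * cut_rate N b w c1) < cut_time N b w c1"
  shows "cut_time N b w c1 = cut_time N b w c"
proof -
  note JM = cut_index_mono[OF jex c1]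
  have c0: "0 \<le> c" "0 \<le> c1" using c1 by auto
  note J = cut_index_spec[OF jex c0(1)] and J1 = cut_index_spec[OF JM(1) c0(2)]
  obtain j where j: "j \<in> {cut_index N w c1..<N}" "tau_term b w j = cut_time N b w c1"
    using cut_time_attained[OF JM(1)] c1 by auto
  have j1: "1 \<le> j" "j < N" using j J1 c1 by auto
  have L1: "0 < cut_rate N b w c1" using cut_rate_pos[OF nd1] .
  have "cut_index N w c \<le> j"
  proof (rule ccontr)
    assume "\<not> cut_index N w c \<le> j"
    then have "j \<le> cut_index N w c - 1" by simp
    then have "mass w j \<le> mass w (cut_index N w c - 1)" using J by (intro mass_mono) auto
    then have Wj: "mass w j \<le> c" using J by linarith
    have "tau_term b w j \<le> ln (1 + c) / (2 * cut_rate N b w c1)"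
    proof (cases "b j = 0")
      case True then show ?thesis using L1 c1 by (simp add: tau_term_def)
    next
      case False
      then have bj0: "0 < b j" using modulus_nonneg[OF j1] by simp
      have "b j \<le> b (cut_index N w c1)" using modulus_antimono J1 j c1 by auto
      then have "cut_rate N b w c1 \<le> - ln (b j)" unfolding cut_rate_def using bj0 by simp
      moreover have "ln (1 + mass w j) \<le> ln (1 + c)" using Wj mass_nonneg[OF j1(2)] by simp
      ultimately have "ln (1 + mass w j) / (2 * - ln (b j)) \<le> ln (1 + c) / (2 * cut_rate N b w c1)"
        using L1 mass_nonneg[OF j1(2)] c1 by (intro frac_le) auto
      then show ?thesis using False by (simp add: tau_term_def)
    qed
    then show False using j big by simp
  qed
  then have "cut_time N b w c1 \<le> cut_time N b w c"
    using j tau_term_le_cut_time[of j N w c b] by auto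
  then show ?thesis using cut_time_antimono[OF jex c1] by simp
qed

lemma dist_sq_after_cut_time:
  assumes nd: "nondegenerate N b w c" and c: "0 < c" and a: "0 < a" and t: "0 < cut_time N b w c"
  shows "dist_sq N b w (nat \<lceil>(1 + a) * cut_time N b w c\<rceil>)
           \<le> 2 * c + (1 + 1/a) * exp (- 2 * a * (cut_time N b w c * cut_rate N b w c))"
proof -
  define l where "l = cut_rate N b w c"
  define M where "M = nat \<lceil>(1 + a) * cut_time N b w c\<rceil>"
  have l: "0 < l" using cut_rate_pos[OF nd] by (simp add: l_def)
  have "(1 + a) * cut_time N b w c \<le> real M" unfolding M_def by linarith
  then have gap: "a * cut_time N b w c \<le> M - cut_time N b w c" by (simp add: algebra_simps)
  then have pos: "0 < M - cut_time N b w c" using a t by (smt (verit) mult_pos_pos)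
  have "dist_sq N b w M \<le> c + c * b (cut_index N w c) ^ (2*M)
      + M / (M - cut_time N b w c) * exp (- 2 * l * (M - cut_time N b w c))"
    using dist_sq_upper_bound[OF nd c order_refl] pos by (simp add: l_def)
  moreover have "c * b (cut_index N w c) ^ (2*M) \<le> c"
    using nd c by (intro mult_left_le power_le_one) (auto simp: nondegenerate_def)
  moreover have "M / (M - cut_time N b w c) * exp (- 2 * l * (M - cut_time N b w c))
      \<le> (1 + 1/a) * exp (- 2 * a * (cut_time N b w c * l))"
  proof (rule mult_mono)
    show "M / (M - cut_time N b w c) \<le> 1 + 1/a"
      using gap pos a t by (simp add: divide_le_eq field_simps)
    show "exp (- 2 * l * (M - cut_time N b w c)) \<le> exp (- 2 * a * (cut_time N b w c * l))"
      using mult_left_mono[OF gap, of l] l by (simp add: algebra_simps)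
  qed (use a in auto)
  ultimately have "dist_sq N b w M \<le> c + c + (1 + 1/a) * exp (- 2 * a * (cut_time N b w c * l))"
    by linarith
  then show ?thesis by (simp add: M_def l_def)
qed

lemma dist_sq_before_cut_time:
  assumes nd: "nondegenerate N b w c" and c: "0 < c" and a: "0 \<le> a" "a \<le> 1"
  shows "c / (1 + c) * exp (2 * a * (cut_time N b w c * cut_rate N b w c))
           \<le> dist_sq N b w (nat \<lfloor>(1 - a) * cut_time N b w c\<rfloor>)"
proof -
  define t where "t = cut_time N b w c"
  define m where "m = nat \<lfloor>(1 - a) * t\<rfloor>"
  have t0: "0 \<le> t" using cut_time_nonneg c nd by (simp add: nondegenerate_def t_def)
  have m: "real m \<le> (1 - a) * t" unfolding m_def using t0 a by simp
  then have gap: "a * t \<le> t - m" by (simp add: algebra_simps)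
  have "exp (2 * a * (t * cut_rate N b w c)) \<le> exp (2 * cut_rate N b w c * (t - m))"
    using mult_left_mono[OF gap, of "cut_rate N b w c"] cut_rate_pos[OF nd] by (simp add: algebra_simps)
  then have "c / (1 + c) * exp (2 * a * (t * cut_rate N b w c))
      \<le> c / (1 + c) * exp (2 * cut_rate N b w c * (t - m))"
    using c by (intro mult_left_mono) auto
  also have "\<dots> \<le> dist_sq N b w m"
  proof -
    have "real m \<le> t" using gap mult_nonneg_nonneg[OF a(1) t0] by linarith
    then show ?thesis using dist_sq_lower_bound[OF nd c] by (simp add: t_def)
  qed
  finally show ?thesis by (simp add: t_def m_def)
qed

lemma dist_sq_beyond_twice_cut_time:
  assumes nd: "nondegenerate N b w c" and c: "0 < c" and K: "0 < K"
  shows "dist_sq N b w (nat \<lceil>2 * cut_time N b w c + K / cut_rate N b w c\<rceil>) \<le> 2 * c + 2 * exp (- 2 * K)"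
proof -
  define t l where "t = cut_time N b w c" and "l = cut_rate N b w c"
  define M where "M = nat \<lceil>2 * t + K / l\<rceil>"
  have l: "0 < l" using cut_rate_pos[OF nd] by (simp add: l_def)
  have t0: "0 \<le> t" using cut_time_nonneg c nd by (simp add: nondegenerate_def t_def)
  have M: "2 * t + K / l \<le> real M" unfolding M_def by linarith
  have Kl: "0 < K / l" using K l by simp
  have pos: "0 < M - t" using M t0 Kl by linarith
  have "dist_sq N b w M \<le> c + c * b (cut_index N w c) ^ (2*M) + M / (M - t) * exp (- 2 * l * (M - t))"
    using dist_sq_upper_bound[OF nd c order_refl] pos by (simp add: t_def l_def)
  moreover have "c * b (cut_index N w c) ^ (2*M) \<le> c"
    using nd c by (intro mult_left_le power_le_one) (auto simp: nondegenerate_def)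
  moreover have "M / (M - t) * exp (- 2 * l * (M - t)) \<le> 2 * exp (- 2 * K)"
  proof (rule mult_mono)
    show "M / (M - t) \<le> 2" using M pos Kl by (simp add: divide_le_eq)
    have "K = l * (K / l)" using l by simp
    also have "\<dots> \<le> l * (M - t)" using M t0 l by (intro mult_left_mono) auto
    finally show "exp (- 2 * l * (M - t)) \<le> exp (- 2 * K)" by simp
  qed auto
  ultimately have "dist_sq N b w M \<le> c + c + 2 * exp (- 2 * K)" by linarith
  then show ?thesis by (simp add: M_def t_def l_def)
qed

lemma cut_rate_mult_gt:
  assumes jex: "has_cut_index N w c" and c: "0 < c" and b0: "0 < b (cut_index N w c)"
    and small: "dist_sq N b w M < c * exp (- x)" and x: "0 \<le> x"
  shows "nondegenerate N b w c" "x < 2 * cut_rate N b w c * M"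
proof -
  have "c * b (cut_index N w c) ^ (2*M) < c * exp (- x)"
    using cut_mult_le_dist_sq[OF jex, of M] c small by linarith
  then have pow: "b (cut_index N w c) ^ (2*M) < exp (- x)"
    using c by (simp add: mult_less_cancel_left_pos)
  have "b (cut_index N w c) < 1"
  proof (rule ccontr)
    assume "\<not> b (cut_index N w c) < 1"
    then have "1 \<le> b (cut_index N w c) ^ (2*M)" by (simp add: one_le_power)
    moreover have "exp (- x) \<le> 1" using x by simp
    ultimately show False using pow by simp
  qed
  then show nd: "nondegenerate N b w c" using jex b0 by (simp add: nondegenerate_def)
  show "x < 2 * cut_rate N b w c * M" using pow cut_modulus_pow[OF nd, of M] by simp
qed

lemma cut_time_minus_le:
  assumes nd: "nondegenerate N b w c" and c: "0 < c" and m: "real m \<le> cut_time N b w c"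
    and e: "0 < e" and small: "dist_sq N b w m \<le> e\<^sup>2"
  shows "cut_rate N b w c * (cut_time N b w c - m) \<le> ln (e\<^sup>2 * (1 + c) / c) / 2"
proof -
  have "c / (1 + c) * exp (2 * cut_rate N b w c * (cut_time N b w c - m)) \<le> e\<^sup>2"
    using dist_sq_lower_bound[OF nd c m] small by simp
  then have "exp (2 * cut_rate N b w c * (cut_time N b w c - m)) \<le> e\<^sup>2 * (1 + c) / c"
    using c by (simp add: field_simps)
  then have "2 * cut_rate N b w c * (cut_time N b w c - m) \<le> ln (e\<^sup>2 * (1 + c) / c)"
    using c e by (subst ln_ge_iff) auto
  then show ?thesis by simp
qed

text \<open>Just after the cut time, at \<open>\<tau> + A \<surd>(\<tau>/\<lambda>)\<close>: with \<open>x = \<surd>(\<tau> \<lambda>)\<close> the ratio \<open>m / (m - \<tau>)\<close> is at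
  most \<open>1 + x\<close> and the exponential factor at most \<open>exp (-2 A x)\<close>.\<close>

lemma dist_sq_after_cut_time_window:
  assumes nd: "nondegenerate N b w c" and c1: "0 < c1" "c1 \<le> c"
    and tl: "1 \<le> cut_time N b w c * cut_rate N b w c" and A: "1 \<le> A"
  defines "M \<equiv> nat \<lceil>cut_time N b w c + A * sqrt (cut_time N b w c / cut_rate N b w c)\<rceil>"
  shows "dist_sq N b w M \<le> c1 + c * b (cut_index N w c1) ^ (2*M) + exp (1 - 2 * A)"
proof -
  define t l where "t = cut_time N b w c" and "l = cut_rate N b w c"
  define x q where "x = sqrt (t * l)" and "q = sqrt (t / l)"
  define s where "s = A * q"
  have l: "0 < l" using cut_rate_pos[OF nd] by (simp add: l_def)
  have t: "0 < t" using tl l zero_less_mult_pos2[of t l] by (simp add: t_def l_def)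
  have x1: "1 \<le> x" using tl by (simp add: x_def t_def l_def)
  have q0: "0 < q" using t l by (simp add: q_def)
  have s0: "0 < s" using A q0 by (simp add: s_def)
  have "t * l * (t / l) = t\<^sup>2" using l by (simp add: power2_eq_square)
  then have "x * q = sqrt (t\<^sup>2)" by (simp only: x_def q_def real_sqrt_mult[symmetric])
  then have xq: "x * q = t" using t by simp
  have "t / l * l\<^sup>2 = t * l" using l by (simp add: power2_eq_square)
  then have "q * sqrt (l\<^sup>2) = x" by (simp only: x_def q_def real_sqrt_mult[symmetric])
  then have lq: "l * q = x" using l by (simp add: mult.commute)
  have ts: "t / s = x / A" using xq[symmetric] q0 by (simp add: s_def)
  have ls: "l * s = A * x" using lq by (simp add: s_def)
  have M: "t + s \<le> real M" unfolding M_def s_def q_def t_def l_def by linarith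
  then have pos: "0 < M - t" using s0 by linarith
  have "dist_sq N b w M \<le> c1 + c * b (cut_index N w c1) ^ (2*M) + M / (M - t) * exp (- 2 * l * (M - t))"
    using dist_sq_upper_bound[OF nd c1] pos by (simp add: t_def l_def)
  moreover have "M / (M - t) * exp (- 2 * l * (M - t)) \<le> (1 + x) * exp (- 2 * A * x)"
  proof (rule mult_mono)
    have "t / (M - t) \<le> t / s" using pos M t s0 by (intro divide_left_mono) auto
    also have "\<dots> \<le> x" using ts A x1 by (simp add: divide_le_eq mult_le_cancel_left1)
    finally show "M / (M - t) \<le> 1 + x" using pos by (simp add: field_simps)
    show "exp (- 2 * l * (M - t)) \<le> exp (- 2 * A * x)"
      using mult_left_mono[of s "M - t" l] M l ls by simp
  qed (use x1 in auto)
  moreover have "(1 + x) * exp (- 2 * A * x) \<le> exp (1 - 2 * A)"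
  proof -
    have "(1 + x) * exp (- 2 * A * x) \<le> exp x * exp (- 2 * A * x)"
      using exp_ge_add_one_self[of x] by (intro mult_right_mono) auto
    also have "\<dots> = exp (- ((2 * A - 1) * x))" by (simp add: exp_add[symmetric] algebra_simps)
    also have "\<dots> \<le> exp (1 - 2 * A)"
      using mult_left_mono[OF x1, of "2 * A - 1"] A by (simp add: algebra_simps)
    finally show ?thesis .
  qed
  ultimately show ?thesis by linarith
qed

lemma cut_index_of_dist_sq_gt:
  assumes big: "c < dist_sq N b w 1" and c: "0 \<le> c"
  shows "has_cut_index N w c" "0 < b (cut_index N w c)"
proof -
  have N: "1 < N" using big c by (cases "N \<le> 1") (auto simp: dist_sq_def)
  have "dist_sq N b w 1 \<le> (\<Sum>i\<in>{1..<N}. w i)" unfolding dist_sq_def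
    by (intro sum_mono mult_left_le) (auto intro: weight_nonneg modulus_pow_le_1)
  also have "\<dots> = mass w (N - 1)" using N unfolding mass_def by (intro sum.cong) auto
  finally show jex: "has_cut_index N w c"
    unfolding has_cut_index_def using big N by (intro exI[of _ "N - 1"]) auto
  note J = cut_index_spec[OF jex c]
  show "0 < b (cut_index N w c)"
  proof (rule ccontr)
    assume "\<not> 0 < b (cut_index N w c)"
    then have b0: "b (cut_index N w c) = 0" using modulus_nonneg J by force
    have "(\<Sum>i\<in>{cut_index N w c..<N}. w i * b i ^ (2*1)) = 0"
    proof (rule sum.neutral, rule ballI)
      fix i assume i: "i \<in> {cut_index N w c..<N}"
      then have "b i = 0"
        using modulus_antimono[of "cut_index N w c" i] modulus_nonneg[of i] J b0 by force
      then show "w i * b i ^ (2*1) = 0" by simp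
    qed
    then have "dist_sq N b w 1 \<le> mass w (cut_index N w c - 1)"
      using dist_sq_split_le[of "cut_index N w c" "cut_index N w c" 1] J b0 by simp
    then show False using J big by simp
  qed
qed

lemma cut_time_gt_half:
  assumes nd: "nondegenerate N b w c" and c: "0 < c" and big: "2 * c + 2 < dist_sq N b w 1"
  shows "1/2 < cut_time N b w c"
proof (rule ccontr)
  define t l where "t = cut_time N b w c" and "l = cut_rate N b w c"
  assume "\<not> 1/2 < cut_time N b w c"
  then have t: "t \<le> 1/2" by (simp add: t_def)
  have "dist_sq N b w 1 \<le> c + c * b (cut_index N w c) ^ (2*1) + 1 / (1 - t) * exp (- 2 * l * (1 - t))"
    using dist_sq_upper_bound[OF nd c order_refl, of 1] t by (simp add: t_def l_def)
  moreover have "c * b (cut_index N w c) ^ (2*1) \<le> c"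
    using nd c by (intro mult_left_le power_le_one) (auto simp: nondegenerate_def)
  moreover have "1 / (1 - t) * exp (- 2 * l * (1 - t)) \<le> 2 * 1"
    using t cut_rate_pos[OF nd] by (intro mult_mono) (auto simp: l_def divide_le_eq)
  ultimately show False using big by linarith
qed

lemma mix_index_after_cut_time:
  assumes nd: "nondegenerate N b w c" and nd1: "nondegenerate N b w c1" and c1: "0 < c1" "c1 \<le> c"
    and e: "0 < e" and tl: "1 \<le> cut_time N b w c * cut_rate N b w c" and A: "1 \<le> A"
    and small: "c1 + c * exp (- 2 * cut_rate N b w c1 * cut_time N b w c) + exp (1 - 2 * A) \<le> e\<^sup>2"
  shows "dist_sq N b w (mix_index N b w e) \<le> e\<^sup>2"
    and "mix_index N b w e < cut_time N b w c + A * sqrt (cut_time N b w c / cut_rate N b w c) + 1"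
proof -
  define M where "M = nat \<lceil>cut_time N b w c + A * sqrt (cut_time N b w c / cut_rate N b w c)\<rceil>"
  have l: "0 < cut_rate N b w c" using cut_rate_pos[OF nd] .
  have t: "0 < cut_time N b w c"
    using tl l zero_less_mult_pos2[of "cut_time N b w c" "cut_rate N b w c"] by simp
  have nonneg: "0 \<le> A * sqrt (cut_time N b w c / cut_rate N b w c)" using t l A by simp
  have "c * b (cut_index N w c1) ^ (2*M) = c * exp (- 2 * cut_rate N b w c1 * M)"
    using cut_modulus_pow[OF nd1] by simp
  also have "\<dots> \<le> c * exp (- 2 * cut_rate N b w c1 * cut_time N b w c)"
  proof -
    have "cut_time N b w c \<le> real M" unfolding M_def using nonneg by linarith
    then show ?thesis using c1 mult_left_mono[of _ _ "cut_rate N b w c1"] cut_rate_pos[OF nd1] by simp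
  qed
  finally have DM: "dist_sq N b w M \<le> e\<^sup>2"
    using dist_sq_after_cut_time_window[OF nd c1 tl A] small unfolding M_def by linarith
  show "dist_sq N b w (mix_index N b w e) \<le> e\<^sup>2" using dist_sq_mix_index[OF DM] e by simp
  have "mix_index N b w e \<le> M" using mix_index_le[OF DM] e by simp
  moreover have "0 \<le> cut_time N b w c + A * sqrt (cut_time N b w c / cut_rate N b w c)"
    using t nonneg by simp
  ultimately show
    "mix_index N b w e < cut_time N b w c + A * sqrt (cut_time N b w c / cut_rate N b w c) + 1"
    unfolding M_def by linarith
qed

lemma cut_time_minus_mix_index:
  assumes nd: "nondegenerate N b w c" and c: "0 < c" and e: "0 < e" and D: "dist_sq N b w m \<le> e\<^sup>2"
    and tl: "1 \<le> cut_time N b w c * cut_rate N b w c" and L: "ln (e\<^sup>2 * (1 + c) / c) / 2 \<le> L" "0 \<le> L"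
  shows "cut_time N b w c - mix_index N b w e \<le> L * sqrt (cut_time N b w c / cut_rate N b w c)"
proof (cases "real (mix_index N b w e) < cut_time N b w c")
  case False
  have "0 \<le> cut_time N b w c / cut_rate N b w c"
    using cut_time_nonneg cut_rate_pos[OF nd] c nd by (simp add: nondegenerate_def)
  then have "0 \<le> L * sqrt (cut_time N b w c / cut_rate N b w c)" using L by simp
  then show ?thesis using False by linarith
next
  case True
  define t l where "t = cut_time N b w c" and "l = cut_rate N b w c"
  have l: "0 < l" using cut_rate_pos[OF nd] by (simp add: l_def)
  have "l * (t - mix_index N b w e) \<le> L"
    using cut_time_minus_le[OF nd c _ e dist_sq_mix_index[OF D]] True e L by (simp add: t_def l_def)
  then have "t - mix_index N b w e \<le> L * (1 / l)" using l by (simp add: field_simps)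
  also have "\<dots> \<le> L * sqrt (t / l)"
  proof (rule mult_left_mono)
    have "(1 / l)\<^sup>2 \<le> t / l" using tl l by (simp add: t_def l_def power2_eq_square field_simps)
    then show "1 / l \<le> sqrt (t / l)" using l real_le_rsqrt by simp
  qed (use L in simp)
  finally show ?thesis by (simp add: t_def l_def)
qed

lemma ecut_rate_eq: "nondegenerate N b w c \<Longrightarrow> ecut_rate N b w c = ereal (cut_rate N b w c)"
  by (simp add: nondegenerate_def ecut_rate_def cut_rate_def eig_rate_def)

lemma ecut_rate_eq_0:
  assumes "has_cut_index N w c" "0 \<le> c" "0 < b (cut_index N w c)" "\<not> nondegenerate N b w c"
  shows "ecut_rate N b w c = 0"
proof -
  have "b (cut_index N w c) = 1"
    using assms modulus_le_1 cut_index_spec[OF assms(1,2)] by (force simp: nondegenerate_def)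
  then show ?thesis by (simp add: ecut_rate_def eig_rate_def zero_ereal_def)
qed

lemma ecut_time_eq:
  assumes nd: "nondegenerate N b w c" and c: "0 < c"
  shows "ecut_time N b w c = ereal (cut_time N b w c)"
proof -
  have jex: "has_cut_index N w c" using nd by (simp add: nondegenerate_def)
  note J = cut_index_spec[OF jex less_imp_le[OF c]]
  have term_eq: "ereal (ln (1 + mass w j)) / (2 * eig_rate (b j)) = ereal (tau_term b w j)"
    if j: "j \<in> {cut_index N w c..<N}" for j
  proof -
    have "b j \<le> b (cut_index N w c)" using modulus_antimono J j by auto
    then have "0 \<le> b j" "b j < 1" using nd modulus_nonneg J j by (auto simp: nondegenerate_def)
    then show ?thesis using mass_nonneg[of j] j by (auto simp: eig_rate_def tau_term_def)
  qed
  have "ecut_time N b w c = Max (ereal ` tau_term b w ` {cut_index N w c..<N})"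
    unfolding ecut_time_def image_image
      by (rule arg_cong[where f = Max], rule image_cong[OF refl term_eq])
  also have "\<dots> = ereal (cut_time N b w c)"
    unfolding cut_time_def using J by (intro mono_Max_commute[symmetric]) (auto simp: mono_def)
  finally show ?thesis .
qed

end

section \<open>Spectral decomposition of a reversible chain\<close>

text \<open>Orthonormality says that the square matrix \<open>(\<phi>\<^sub>i(x))\<close> has a one-sided inverse; that inverse is
  then two-sided, which is completeness.\<close>

lemma orthonormal_completeness:
  fixes S :: "'a set" and phi :: "nat \<Rightarrow> 'a \<Rightarrow> real" and pp :: "'a \<Rightarrow> real"
  assumes fin: "finite S"
    and orth: "\<And>i k. i < card S \<Longrightarrow> k < card S \<Longrightarrow>
      (\<Sum>x\<in>S. phi i x * phi k x * pp x) = (if i = k then 1 else 0)"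
    and x: "x \<in> S" and y: "y \<in> S"
  shows "(\<Sum>i<card S. pp x * phi i x * phi i y) = (if x = y then 1 else 0)"
proof -
  define N where "N = card S"
  obtain e where e: "bij_betw e {0..<N} S" using ex_bij_betw_nat_finite[OF fin] unfolding N_def by blast
  define A :: "real mat" where "A = mat N N (\<lambda>(i,k). phi i (e k))"
  define B :: "real mat" where "B = mat N N (\<lambda>(k,j). pp (e k) * phi j (e k))"
  have A: "A \<in> carrier_mat N N" and B: "B \<in> carrier_mat N N" by (auto simp: A_def B_def)
  have reidx: "(\<Sum>k<N. f (e k)) = (\<Sum>x\<in>S. f x)" for f :: "'a \<Rightarrow> real"
  proof -
    have "(\<Sum>x\<in>S. f x) = (\<Sum>k\<in>{0..<N}. f (e k))" by (rule sum.reindex_bij_betw[OF e, symmetric])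
    then show ?thesis by (simp add: atLeast0LessThan)
  qed
  have AB: "A * B = 1\<^sub>m N"
  proof (rule eq_matI)
    fix i j assume ij: "i < dim_row (1\<^sub>m N)" "j < dim_col (1\<^sub>m N)"
    then have ij': "i < N" "j < N" by auto
    have "(A * B) $$ (i, j) = (\<Sum>k<N. phi i (e k) * (pp (e k) * phi j (e k)))"
      using ij' by (simp add: A_def B_def scalar_prod_def atLeast0LessThan)
    also have "\<dots> = (\<Sum>x\<in>S. phi i x * phi j x * pp x)"
      using reidx[of "\<lambda>x. phi i x * phi j x * pp x"] by (simp add: algebra_simps)
    also have "\<dots> = 1\<^sub>m N $$ (i, j)" using orth ij' by (simp add: N_def)
    finally show "(A * B) $$ (i, j) = 1\<^sub>m N $$ (i, j)" .
  qed (auto simp: A_def B_def)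
  have BA: "B * A = 1\<^sub>m N" using mat_mult_left_right_inverse[OF A B AB] .
  have im: "e ` {0..<N} = S" using bij_betw_imp_surj_on[OF e] .
  have inj: "inj_on e {0..<N}" using bij_betw_imp_inj_on[OF e] .
  obtain k where k: "k < N" "e k = x" using x im by (metis atLeastLessThan_iff imageE)
  obtain l where l: "l < N" "e l = y" using y im by (metis atLeastLessThan_iff imageE)
  have "(B * A) $$ (k, l) = (\<Sum>i<N. pp (e k) * phi i (e k) * phi i (e l))"
    using k l by (simp add: A_def B_def scalar_prod_def atLeast0LessThan)
  moreover have "(B * A) $$ (k, l) = (if k = l then 1 else 0)" using BA k l by simp
  moreover have "(k = l) = (x = y)" using inj_onD[OF inj, of k l] k l by auto
  ultimately show ?thesis using k l by (simp add: N_def)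
qed

locale spectral_chain =
  fixes S :: "'a set" and K :: "'a \<Rightarrow> 'a \<Rightarrow> real" and pp mu :: "'a \<Rightarrow> real"
    and beta :: "nat \<Rightarrow> real" and phi :: "nat \<Rightarrow> 'a \<Rightarrow> real"
  assumes chain: "irred_reversible_chain S K pp" and init: "is_prob S mu"
    and eig: "ordered_eigenbasis S K pp beta phi"
begin

lemma finite_states: "finite S" and states_nonempty: "S \<noteq> {}"
  using chain by (auto simp: irred_reversible_chain_def)

lemma pi_pos: "x \<in> S \<Longrightarrow> 0 < pp x"
  using chain by (auto simp: irred_reversible_chain_def)

lemma reversible: "x \<in> S \<Longrightarrow> y \<in> S \<Longrightarrow> pp x * K x y = pp y * K y x"
  using chain by (auto simp: irred_reversible_chain_def)

lemma kernel_nonneg: "x \<in> S \<Longrightarrow> y \<in> S \<Longrightarrow> 0 \<le> K x y"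
  and kernel_row_sum: "x \<in> S \<Longrightarrow> (\<Sum>y\<in>S. K x y) = 1"
  using chain by (auto simp: irred_reversible_chain_def stochastic_def)

lemma eigenvector: "i < card S \<Longrightarrow> x \<in> S \<Longrightarrow> (\<Sum>y\<in>S. K x y * phi i y) = beta i * phi i x"
  and orthonormal:
    "i < card S \<Longrightarrow> k < card S \<Longrightarrow> (\<Sum>x\<in>S. phi i x * phi k x * pp x) = (if i = k then 1 else 0)"
  and phi_0: "x \<in> S \<Longrightarrow> phi 0 x = 1" and beta_0: "beta 0 = 1"
  using eig by (auto simp: ordered_eigenbasis_def)

lemma mu_sum: "(\<Sum>x\<in>S. mu x) = 1"
  using init by (simp add: is_prob_def)

lemma completeness:
  "x \<in> S \<Longrightarrow> y \<in> S \<Longrightarrow> (\<Sum>i<card S. pp x * phi i x * phi i y) = (if x = y then 1 else 0)"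
  by (rule orthonormal_completeness[OF finite_states orthonormal])

lemma left_eigenvector:
  assumes i: "i < card S" and y: "y \<in> S"
  shows "(\<Sum>x\<in>S. pp x * phi i x * K x y) = beta i * (pp y * phi i y)"
proof -
  have "(\<Sum>x\<in>S. pp x * phi i x * K x y) = (\<Sum>x\<in>S. pp y * (K y x * phi i x))"
    by (rule sum.cong) (use reversible y in \<open>auto simp: algebra_simps\<close>)
  also have "\<dots> = pp y * (beta i * phi i y)"
    using eigenvector[OF i y] by (simp add: sum_distrib_left[symmetric])
  finally show ?thesis by simp
qed

lemma left_eigenvector_kpow:
  assumes i: "i < card S"
  shows "y \<in> S \<Longrightarrow> (\<Sum>x\<in>S. pp x * phi i x * kpow S K m x y) = beta i ^ m * (pp y * phi i y)"
proof (induction m arbitrary: y)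
  case 0
  have "(\<Sum>x\<in>S. pp x * phi i x * kpow S K 0 x y) = (\<Sum>x\<in>S. if x = y then pp x * phi i x else 0)"
    by (rule sum.cong) auto
  also have "\<dots> = pp y * phi i y" using 0 finite_states by (simp add: sum.delta')
  finally show ?case by simp
next
  case (Suc m)
  have "(\<Sum>x\<in>S. pp x * phi i x * kpow S K (Suc m) x y)
      = (\<Sum>x\<in>S. \<Sum>z\<in>S. pp x * phi i x * kpow S K m x z * K z y)"
    by (simp add: sum_distrib_left mult.assoc)
  also have "\<dots> = (\<Sum>z\<in>S. (\<Sum>x\<in>S. pp x * phi i x * kpow S K m x z) * K z y)"
    by (subst sum.swap) (simp add: sum_distrib_right)
  also have "\<dots> = (\<Sum>z\<in>S. beta i ^ m * (pp z * phi i z * K z y))"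
    by (rule sum.cong) (use Suc.IH in \<open>auto simp: algebra_simps\<close>)
  also have "\<dots> = beta i ^ m * (beta i * (pp y * phi i y))"
    using left_eigenvector[OF i Suc.prems] by (simp add: sum_distrib_left[symmetric])
  finally show ?case by simp
qed

lemma initial_expansion:
  assumes x: "x \<in> S" shows "mu x = (\<Sum>i<card S. coef S mu (phi i) * (pp x * phi i x))"
proof -
  have "(\<Sum>i<card S. coef S mu (phi i) * (pp x * phi i x))
      = (\<Sum>i<card S. \<Sum>z\<in>S. mu z * (pp x * phi i x * phi i z))"
    unfolding coef_def sum_distrib_right by (intro sum.cong refl) (simp add: algebra_simps)
  also have "\<dots> = (\<Sum>z\<in>S. mu z * (\<Sum>i<card S. pp x * phi i x * phi i z))"
    by (subst sum.swap) (simp add: sum_distrib_left)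
  also have "\<dots> = (\<Sum>z\<in>S. if z = x then mu z else 0)"
    by (rule sum.cong) (use completeness x in auto)
  also have "\<dots> = mu x" using x finite_states by (simp add: sum.delta')
  finally show ?thesis by simp
qed

lemma distK_expansion:
  assumes y: "y \<in> S"
  shows "distK S K mu m y = (\<Sum>i<card S. coef S mu (phi i) * beta i ^ m * (pp y * phi i y))"
proof -
  have "distK S K mu m y
      = (\<Sum>x\<in>S. (\<Sum>i<card S. coef S mu (phi i) * (pp x * phi i x)) * kpow S K m x y)"
    unfolding distK_def by (rule sum.cong) (use initial_expansion in auto)
  also have "\<dots> = (\<Sum>i<card S. coef S mu (phi i) * (\<Sum>x\<in>S. pp x * phi i x * kpow S K m x y))"
    by (simp add: sum_distrib_right sum_distrib_left algebra_simps sum.swap[of _ S])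
  also have "\<dots> = (\<Sum>i<card S. coef S mu (phi i) * (beta i ^ m * (pp y * phi i y)))"
    by (rule sum.cong) (use left_eigenvector_kpow y in auto)
  finally show ?thesis by (simp add: algebra_simps)
qed

lemma density_expansion:
  assumes y: "y \<in> S"
  shows "distK S K mu m y / pp y = (\<Sum>i<card S. coef S mu (phi i) * beta i ^ m * phi i y)"
  using distK_expansion[OF y] pi_pos[OF y] by (simp add: sum_divide_distrib mult.assoc)

lemma parseval:
  assumes I: "I \<subseteq> {..<card S}"
  shows "(\<Sum>y\<in>S. (\<Sum>i\<in>I. a i * phi i y)^2 * pp y) = (\<Sum>i\<in>I. (a i)^2)"
proof -
  have fI: "finite I" using I finite_subset by blast
  have "(\<Sum>y\<in>S. (\<Sum>i\<in>I. a i * phi i y)^2 * pp y)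
      = (\<Sum>y\<in>S. \<Sum>i\<in>I. \<Sum>k\<in>I. a i * a k * (phi i y * phi k y * pp y))"
    by (simp add: power2_eq_square sum_distrib_left sum_distrib_right algebra_simps)
  also have "\<dots> = (\<Sum>i\<in>I. \<Sum>k\<in>I. a i * a k * (\<Sum>y\<in>S. phi i y * phi k y * pp y))"
    by (simp add: sum_distrib_left sum.swap[of _ S])
  also have "\<dots> = (\<Sum>i\<in>I. \<Sum>k\<in>I. if k = i then a i * a k else 0)"
  proof (rule sum.cong[OF refl], rule sum.cong[OF refl])
    fix i k assume ik: "i \<in> I" "k \<in> I"
    then have "i < card S" "k < card S" using I by auto
    then show "a i * a k * (\<Sum>y\<in>S. phi i y * phi k y * pp y) = (if k = i then a i * a k else 0)"
      using orthonormal[of i k] by auto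
  qed
  also have "\<dots> = (\<Sum>i\<in>I. (a i)^2)" using fI by (simp add: sum.delta power2_eq_square)
  finally show ?thesis .
qed

lemma coef_phi_0: "coef S mu (phi 0) = 1"
  unfolding coef_def using mu_sum phi_0 by simp

lemma eigen_indices: "{..<card S} = insert 0 {1..<card S}"
  using finite_states states_nonempty by (auto simp: card_gt_0_iff)

lemma d2_eq_sqrt_dist_sq:
  "d2 S K pp mu m = sqrt (dist_sq (card S) (\<lambda>i. \<bar>beta i\<bar>) (\<lambda>i. (coef S mu (phi i))^2) m)"
proof -
  have "\<And>y. y \<in> S \<Longrightarrow>
      distK S K mu m y / pp y - 1 = (\<Sum>i\<in>{1..<card S}. coef S mu (phi i) * beta i ^ m * phi i y)"
    using density_expansion eigen_indices coef_phi_0 beta_0 phi_0 by simp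
  then have "(\<Sum>y\<in>S. (distK S K mu m y / pp y - 1)^2 * pp y)
      = (\<Sum>y\<in>S. (\<Sum>i\<in>{1..<card S}. (coef S mu (phi i) * beta i ^ m) * phi i y)^2 * pp y)"
    by (intro sum.cong) auto
  also have "\<dots> = (\<Sum>i\<in>{1..<card S}. (coef S mu (phi i) * beta i ^ m)^2)" by (rule parseval) auto
  also have "\<dots> = dist_sq (card S) (\<lambda>i. \<bar>beta i\<bar>) (\<lambda>i. (coef S mu (phi i))^2) m"
    unfolding dist_sq_def
    by (rule sum.cong) (auto simp: power_mult_distrib power_mult[symmetric] power_even_abs mult.commute)
  finally show ?thesis unfolding d2_def by simp
qed

lemma one_step_norm_eq:
  "one_step_norm S K pp mu = 1 + dist_sq (card S) (\<lambda>i. \<bar>beta i\<bar>) (\<lambda>i. (coef S mu (phi i))^2) 1"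
proof -
  have "one_step_norm S K pp mu = (\<Sum>y\<in>S. (distK S K mu 1 y / pp y)^2 * pp y)"
    unfolding one_step_norm_def by (rule sum.cong) (use pi_pos in \<open>auto simp: power2_eq_square\<close>)
  also have "\<dots> = (\<Sum>y\<in>S. (\<Sum>i<card S. (coef S mu (phi i) * beta i ^ 1) * phi i y)^2 * pp y)"
    by (intro sum.cong) (use density_expansion in auto)
  also have "\<dots> = (\<Sum>i<card S. (coef S mu (phi i) * beta i ^ 1)^2)" by (rule parseval) auto
  also have "\<dots> = 1 + (\<Sum>i\<in>{1..<card S}. (coef S mu (phi i) * beta i)^2)"
    unfolding eigen_indices using coef_phi_0 beta_0 by simp
  also have "(\<Sum>i\<in>{1..<card S}. (coef S mu (phi i) * beta i)^2)
      = dist_sq (card S) (\<lambda>i. \<bar>beta i\<bar>) (\<lambda>i. (coef S mu (phi i))^2) 1"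
    unfolding dist_sq_def by (rule sum.cong) (auto simp: power_mult_distrib)
  finally show ?thesis .
qed

lemma abs_eigenvalue_le_1:
  assumes i: "i < card S" shows "\<bar>beta i\<bar> \<le> 1"
proof -
  define M where "M = Max ((\<lambda>x. \<bar>phi i x\<bar>) ` S)"
  have "M \<in> (\<lambda>x. \<bar>phi i x\<bar>) ` S"
    unfolding M_def by (rule Max_in) (use finite_states states_nonempty in auto)
  then obtain x where x: "x \<in> S" "\<bar>phi i x\<bar> = M" by auto
  have Mge: "\<And>y. y \<in> S \<Longrightarrow> \<bar>phi i y\<bar> \<le> M" unfolding M_def using finite_states by auto
  have Mpos: "0 < M"
  proof (rule ccontr)
    assume "\<not> 0 < M"
    then have "\<And>y. y \<in> S \<Longrightarrow> phi i y = 0"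
      using Mge by (metis abs_ge_zero abs_le_zero_iff order_trans not_less)
    then have "(\<Sum>x\<in>S. phi i x * phi i x * pp x) = 0" by simp
    then show False using orthonormal[OF i i] by simp
  qed
  have "\<bar>beta i\<bar> * M = \<bar>\<Sum>y\<in>S. K x y * phi i y\<bar>"
    using eigenvector[OF i x(1)] x(2) by (simp add: abs_mult)
  also have "\<dots> \<le> (\<Sum>y\<in>S. \<bar>K x y * phi i y\<bar>)" by (rule sum_abs)
  also have "\<dots> \<le> (\<Sum>y\<in>S. K x y * M)"
    by (rule sum_mono) (use kernel_nonneg x Mge in \<open>auto simp: abs_mult intro!: mult_left_mono\<close>)
  also have "\<dots> = M" using kernel_row_sum[OF x(1)] by (simp add: sum_distrib_right[symmetric])
  finally show ?thesis using Mpos by (simp add: mult_le_cancel_right1)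
qed

lemma spectral_profile: "spectral_profile (card S) (\<lambda>i. \<bar>beta i\<bar>) (\<lambda>i. (coef S mu (phi i))^2)"
  unfolding spectral_profile_def using abs_eigenvalue_le_1 eig by (auto simp: ordered_eigenbasis_def)

lemma T2_eq_mixing_time:
  "T2 S K pp mu e = mixing_time (card S) (\<lambda>i. \<bar>beta i\<bar>) (\<lambda>i. (coef S mu (phi i))\<^sup>2) e"
  unfolding T2_def mixing_time_def mix_index_def d2_eq_sqrt_dist_sq ..

end

lemma eig_rate_abs: "eig_rate \<bar>x\<bar> = eig_rate x"
  by (simp add: eig_rate_def)

lemma jn_eq_cut_index: "jn S mu phi c = cut_index (card S) (\<lambda>i. (coef S mu (phi i))\<^sup>2) c"
  unfolding jn_def cut_index_def partial_mass_def mass_def ..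

lemma taun_eq_ecut_time:
  "taun S beta mu phi c = ecut_time (card S) (\<lambda>i. \<bar>beta i\<bar>) (\<lambda>i. (coef S mu (phi i))\<^sup>2) c"
  unfolding taun_def ecut_time_def jn_eq_cut_index eig_rate_abs partial_mass_def mass_def ..

section \<open>Families of spectral profiles\<close>

lemma tendsto_exp_neg_mult_at_top:
  fixes X :: "nat \<Rightarrow> real"
  assumes "filterlim X at_top sequentially" "0 < k"
  shows "((\<lambda>n. C * exp (- k * X n)) \<longlongrightarrow> 0) sequentially"
proof -
  have "filterlim (\<lambda>n. - k * X n) at_bot sequentially"
    using assms by (intro filterlim_tendsto_neg_mult_at_bot[OF tendsto_const]) auto
  then show ?thesis by (intro tendsto_mult_right_zero filterlim_compose[OF exp_at_bot])
qed

lemma filterlim_exp_mult_at_top: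
  fixes X :: "nat \<Rightarrow> real"
  assumes "filterlim X at_top sequentially" "0 < k" "0 < C"
  shows "filterlim (\<lambda>n. C * exp (k * X n)) at_top sequentially"
proof -
  have "filterlim (\<lambda>n. k * X n) at_top sequentially"
    using assms by (intro filterlim_tendsto_pos_mult_at_top[OF tendsto_const]) auto
  then show ?thesis
    using assms
      by (intro filterlim_tendsto_pos_mult_at_top[OF tendsto_const] filterlim_compose[OF exp_at_top])
qed

lemma exp_minus_le_inverse:
  fixes q x :: real
  assumes "0 < q" "ln q \<le> x" shows "exp (- x) \<le> 1 / q"
proof -
  have "q \<le> exp x" using assms by (metis exp_le_cancel_iff exp_ln)
  then show ?thesis using assms(1) by (simp add: exp_minus field_simps)
qed

lemma cutoff_limits_cong:
  assumes ev: "eventually (\<lambda>n. t n = t' n) sequentially" and cut: "cutoff_limits d t"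
  shows "cutoff_limits d t'"
  unfolding cutoff_limits_def
proof (intro allI impI conjI)
  fix a :: real assume "0 < a \<and> a < 1"
  then have "(\<lambda>n. d n (nat \<lceil>(1 + a) * t n\<rceil>)) \<longlonglongrightarrow> 0"
    and "filterlim (\<lambda>n. d n (nat \<lfloor>(1 - a) * t n\<rfloor>)) at_top sequentially"
    using cut unfolding cutoff_limits_def by blast+
  moreover have "eventually (\<lambda>n. d n (nat \<lceil>(1 + a) * t n\<rceil>) = d n (nat \<lceil>(1 + a) * t' n\<rceil>)) sequentially"
    and "eventually (\<lambda>n. d n (nat \<lfloor>(1 - a) * t n\<rfloor>) = d n (nat \<lfloor>(1 - a) * t' n\<rfloor>)) sequentially"
    using ev by (auto elim: eventually_mono)
  ultimately show "(\<lambda>n. d n (nat \<lceil>(1 + a) * t' n\<rceil>)) \<longlonglongrightarrow> 0"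
    and "filterlim (\<lambda>n. d n (nat \<lfloor>(1 - a) * t' n\<rfloor>)) at_top sequentially"
    by (simp_all add: tendsto_cong filterlim_cong)
qed

locale profile_family =
  fixes N :: "nat \<Rightarrow> nat" and b w :: "nat \<Rightarrow> nat \<Rightarrow> real"
  assumes profile: "\<And>n. spectral_profile (N n) (b n) (w n)"
    and dist_sq_1_unbounded: "filterlim (\<lambda>n. dist_sq (N n) (b n) (w n) 1) at_top sequentially"
begin

interpretation P: spectral_profile "N n" "b n" "w n" for n
  by (rule profile)

abbreviation "D n m \<equiv> dist_sq (N n) (b n) (w n) m"
abbreviation "J n c \<equiv> cut_index (N n) (w n) c"
abbreviation "tau n c \<equiv> cut_time (N n) (b n) (w n) c"
abbreviation "lam n c \<equiv> cut_rate (N n) (b n) (w n) c"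
abbreviation "good n c \<equiv> nondegenerate (N n) (b n) (w n) c"
abbreviation "mix n e \<equiv> mix_index (N n) (b n) (w n) e"

abbreviation sharp :: "real \<Rightarrow> bool" where
  "sharp c \<equiv> eventually (\<lambda>n. good n c) sequentially
     \<and> filterlim (\<lambda>n. tau n c * lam n c) at_top sequentially"

lemma eventually_dist_sq_1_gt: "eventually (\<lambda>n. K < D n 1) sequentially"
  using dist_sq_1_unbounded unfolding filterlim_at_top_dense by blast

lemma eventually_cut_index:
  assumes "0 < c" shows "eventually (\<lambda>n. has_cut_index (N n) (w n) c \<and> 0 < b n (J n c)) sequentially"
  using eventually_dist_sq_1_gt[of c] by eventually_elim (use P.cut_index_of_dist_sq_gt assms in auto)

lemma eventually_nondegenerate_mono:
  assumes "eventually (\<lambda>n. good n c) sequentially" "0 < c" "c \<le> ct"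
  shows "eventually (\<lambda>n. good n ct \<and> lam n c \<le> lam n ct) sequentially"
proof -
  have "0 < ct" using assms by simp
  from assms(1) eventually_cut_index[OF this] show ?thesis
    by eventually_elim (use P.nondegenerate_mono assms(2,3) in auto)
qed

lemma eventually_cut_time_gt_half:
  assumes "eventually (\<lambda>n. good n c) sequentially" "0 < c"
  shows "eventually (\<lambda>n. 1/2 < tau n c) sequentially"
  using assms(1) eventually_dist_sq_1_gt[of "2 * c + 2"]
    by eventually_elim (use P.cut_time_gt_half assms(2) in auto)

lemma eventually_cut_time_eq:
  assumes c: "0 < c" "c \<le> ct" and sharp: "sharp c"
  shows "eventually (\<lambda>n. tau n c = tau n ct) sequentially"
proof -
  have "eventually (\<lambda>n. ln (1 + ct) / 2 < tau n c * lam n c) sequentially"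
    using sharp unfolding filterlim_at_top_dense by blast
  moreover have "eventually (\<lambda>n. has_cut_index (N n) (w n) ct \<and> 0 < b n (J n ct)) sequentially"
    using c by (intro eventually_cut_index) simp
  ultimately show ?thesis using conjunct1[OF sharp]
  proof eventually_elim
    case (elim n)
    have "0 < lam n c" using cut_rate_pos elim by blast
    then have "ln (1 + ct) / (2 * lam n c) < tau n c" using elim(1) by (simp add: field_simps)
    then show ?case using P.cut_time_eq_of_gt c elim by blast
  qed
qed

lemma time_rate_antimono:
  assumes c: "0 < c1" "c1 \<le> c2" and good: "eventually (\<lambda>n. good n c) sequentially"
    and lim: "filterlim (\<lambda>n. tau n c2 * lam n c) at_top sequentially"
  shows "filterlim (\<lambda>n. tau n c1 * lam n c) at_top sequentially"
proof (rule filterlim_at_top_mono[OF lim])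
  show "eventually (\<lambda>n. tau n c2 * lam n c \<le> tau n c1 * lam n c) sequentially"
  proof -
    have "0 < c2" using c by simp
    from good eventually_cut_index[OF this] show ?thesis
      by eventually_elim (use c in \<open>auto intro!: mult_right_mono P.cut_time_antimono
          less_imp_le[OF cut_rate_pos]\<close>)
  qed
qed

subsection \<open>Cutoff at the cut time\<close>

lemma after_cut_time_tendsto_0:
  assumes ct: "0 < ct" and sharp: "\<And>c. 0 < c \<Longrightarrow> c \<le> ct \<Longrightarrow> sharp c" and a: "0 < a"
  shows "(\<lambda>n. sqrt (D n (nat \<lceil>(1 + a) * tau n ct\<rceil>))) \<longlonglongrightarrow> 0"
proof (rule tendstoI)
  fix e :: real assume e: "0 < e"
  define c where "c = min ct (e\<^sup>2/4)"
  have c: "0 < c" "c \<le> ct" "2 * c \<le> e\<^sup>2/2" using ct e by (auto simp: c_def)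
  note sc = sharp[OF c(1,2)]
  have "((\<lambda>n. (1 + 1/a) * exp (- (2 * a) * (tau n c * lam n c))) \<longlongrightarrow> 0) sequentially"
    using sc a by (intro tendsto_exp_neg_mult_at_top) auto
  then have small:
      "eventually (\<lambda>n. (1 + 1/a) * exp (- (2 * a) * (tau n c * lam n c)) < e\<^sup>2/2) sequentially"
    using e by (intro order_tendstoD(2)) auto
  have "eventually (\<lambda>n. 0 < tau n c * lam n c) sequentially"
    using sc unfolding filterlim_at_top_dense by blast
  then show "eventually (\<lambda>n. dist (sqrt (D n (nat \<lceil>(1 + a) * tau n ct\<rceil>))) 0 < e) sequentially"
    using conjunct1[OF sc] small eventually_cut_time_eq[OF c(1,2) sc]
  proof eventually_elim
    case (elim n)
    have "0 < tau n c" using elim(1) cut_rate_pos[OF elim(2)] zero_less_mult_pos2 by blast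
    then have "D n (nat \<lceil>(1 + a) * tau n c\<rceil>)
        \<le> 2 * c + (1 + 1/a) * exp (- (2 * a) * (tau n c * lam n c))"
      using P.dist_sq_after_cut_time[OF elim(2) c(1) a] by simp
    then have "D n (nat \<lceil>(1 + a) * tau n c\<rceil>) < e\<^sup>2" using elim(3) c by linarith
    then have "sqrt (D n (nat \<lceil>(1 + a) * tau n c\<rceil>)) < sqrt (e\<^sup>2)" by (rule real_sqrt_less_mono)
    then show ?case using elim(4) e P.dist_sq_nonneg by simp
  qed
qed

lemma before_cut_time_unbounded:
  assumes ct: "0 < ct" and sharp: "sharp ct" and a: "0 < a" "a < 1"
  shows "filterlim (\<lambda>n. sqrt (D n (nat \<lfloor>(1 - a) * tau n ct\<rfloor>))) at_top sequentially"
proof -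
  have "filterlim (\<lambda>n. ct / (1 + ct) * exp (2 * a * (tau n ct * lam n ct))) at_top sequentially"
    using sharp a ct by (intro filterlim_exp_mult_at_top) auto
  then have "filterlim (\<lambda>n. D n (nat \<lfloor>(1 - a) * tau n ct\<rfloor>)) at_top sequentially"
  proof (rule filterlim_at_top_mono)
    show "eventually (\<lambda>n. ct / (1 + ct) * exp (2 * a * (tau n ct * lam n ct))
        \<le> D n (nat \<lfloor>(1 - a) * tau n ct\<rfloor>)) sequentially"
      using conjunct1[OF sharp] by eventually_elim (use P.dist_sq_before_cut_time ct a in auto)
  qed
  then show ?thesis by (rule filterlim_compose[OF sqrt_at_top])
qed

lemma sharp_imp_cutoff_limits:
  assumes "0 < ct" "\<And>c. 0 < c \<Longrightarrow> c \<le> ct \<Longrightarrow> sharp c"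
  shows "cutoff_limits (\<lambda>n m. sqrt (D n m)) (\<lambda>n. tau n ct)"
  unfolding cutoff_limits_def
  using after_cut_time_tendsto_0[OF assms]
    before_cut_time_unbounded[OF assms(1) assms(2)[OF assms(1) order_refl]]
  by simp

subsection \<open>Cutoff forces \<open>T\<^sub>2 \<lambda>\<close> and \<open>\<tau> \<lambda>\<close> to diverge\<close>

text \<open>Between \<open>t/2\<close> and \<open>3t/2\<close> the distance drops from above \<open>\<epsilon>\<close> to almost \<open>0\<close>; the latter forces
  \<open>b\<^sub>j\<^sub>(\<^sub>c\<^sub>)\<^sup>2\<^sup>M\<close> to be small at \<open>M = \<lceil>3t/2\<rceil> \<le> 4 T\<^sub>2(\<epsilon>)\<close>.\<close>

lemma cutoff_imp_mix_rate:
  assumes cut: "cutoff_limits (\<lambda>n m. sqrt (D n m)) t" and t: "\<And>n. 0 < t n" and c: "0 < c" and e: "0 < e"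
  shows "eventually (\<lambda>n. good n c \<and> (\<exists>m. sqrt (D n m) \<le> e)) sequentially"
    and "filterlim (\<lambda>n. real (mix n e) * lam n c) at_top sequentially"
proof -
  define M ml where "M n = nat \<lceil>(1 + 1/2) * t n\<rceil>" and "ml n = nat \<lfloor>(1 - 1/2) * t n\<rfloor>" for n
  have "0 < (1/2::real) \<and> (1/2::real) < 1" by simp
  from cut[unfolded cutoff_limits_def, rule_format, OF this]
  have up: "(\<lambda>n. sqrt (D n (M n))) \<longlonglongrightarrow> 0" and lo: "filterlim (\<lambda>n. sqrt (D n (ml n))) at_top sequentially"
    unfolding M_def ml_def by blast+
  have big: "eventually (\<lambda>n. e < sqrt (D n (ml n))) sequentially"
    using lo unfolding filterlim_at_top_dense by blast
  have main: "eventually (\<lambda>n. good n c \<and> D n (M n) \<le> e\<^sup>2 \<and> Z \<le> real (mix n e) * lam n c) sequentially"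
    for Z
  proof -
    define x where "x = 8 * max Z 0"
    have "0 < sqrt (min (e\<^sup>2) (c * exp (- x)))" using e c by simp
    from order_tendstoD(2)[OF up this] big eventually_cut_index[OF c] show ?thesis
    proof eventually_elim
      case (elim n)
      have "D n (M n) < min (e\<^sup>2) (c * exp (- x))" using elim(1) by (simp add: real_sqrt_less_iff)
      then have DM: "D n (M n) \<le> e\<^sup>2" "D n (M n) < c * exp (- x)" by auto
      have nd: "good n c" and xM: "x < 2 * lam n c * M n"
        using P.cut_rate_mult_gt[OF _ c _ DM(2)] elim(3) by (auto simp: x_def)
      have "sqrt (e\<^sup>2) < sqrt (D n (ml n))" using elim(2) e by simp
      then have "e\<^sup>2 < D n (ml n)" by (simp only: real_sqrt_less_iff)
      then have "ml n < mix n e" using P.less_mix_index DM(1) e by simp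
      moreover have "real (M n) < 3/2 * t n + 1" "1/2 * t n < real (ml n) + 1"
        using t[of n] unfolding M_def ml_def by simp_all linarith+
      ultimately have "real (M n) \<le> 4 * real (mix n e)" by linarith
      then have "lam n c * M n \<le> lam n c * (4 * mix n e)"
        using cut_rate_pos[OF nd] by (intro mult_left_mono) auto
      then have "x \<le> 8 * (lam n c * mix n e)" using xM by linarith
      then show ?case using nd DM(1) by (simp add: x_def mult.commute)
    qed
  qed
  show "eventually (\<lambda>n. good n c \<and> (\<exists>m. sqrt (D n m) \<le> e)) sequentially"
    using main[of 0] by eventually_elim (use P.sqrt_dist_sq_le_iff e in \<open>auto intro: less_imp_le\<close>)
  show "filterlim (\<lambda>n. real (mix n e) * lam n c) at_top sequentially"
    unfolding filterlim_at_top using main by (blast intro: eventually_mono)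
qed

text \<open>Conversely, at \<open>2 \<tau>(c') + K/\<lambda>(c')\<close> the distance is below \<open>\<epsilon>\<close> (for \<open>4 c' \<le> \<epsilon>\<^sup>2\<close>), so
  \<open>T\<^sub>2(\<epsilon>) \<lambda>(c) \<le> 4 \<tau>(c') \<lambda>(c) + K\<close>.\<close>

lemma mix_rate_imp_time_rate:
  assumes c: "0 < c" "c \<le> ct" and e: "0 < e" "4 * ct \<le> e\<^sup>2"
    and good: "eventually (\<lambda>n. good n c) sequentially"
    and lim: "filterlim (\<lambda>n. real (mix n e) * lam n c) at_top sequentially"
  shows "filterlim (\<lambda>n. tau n ct * lam n c) at_top sequentially"
  unfolding filterlim_at_top
proof
  fix Z :: real
  define K where "K = max 1 (ln (4 / e\<^sup>2) / 2)"
  have K: "0 < K" by (simp add: K_def)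
  have "exp (- (2 * K)) \<le> 1 / (4 / e\<^sup>2)" using e by (intro exp_minus_le_inverse) (auto simp: K_def)
  then have eK: "2 * ct + 2 * exp (- 2 * K) \<le> e\<^sup>2" using e by simp
  note up = eventually_nondegenerate_mono[OF good c]
  have half: "eventually (\<lambda>n. 1/2 < tau n ct) sequentially"
    using up c by (intro eventually_cut_time_gt_half) (auto elim: eventually_mono)
  have "eventually (\<lambda>n. 4 * max Z 0 + K \<le> real (mix n e) * lam n c) sequentially"
    using lim unfolding filterlim_at_top by blast
  with good up half show "eventually (\<lambda>n. Z \<le> tau n ct * lam n c) sequentially"
  proof eventually_elim
    case (elim n)
    define t l l0 where "t = tau n ct" and "l = lam n c" and "l0 = lam n ct"
    have l: "0 < l" using cut_rate_pos[OF elim(1)] by (simp add: l_def)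
    have l0: "0 < l0" "l \<le> l0" using cut_rate_pos elim(2) by (auto simp: l_def l0_def)
    have "D n (nat \<lceil>2 * t + K / l0\<rceil>) \<le> e\<^sup>2"
      using P.dist_sq_beyond_twice_cut_time[of n ct K] elim(2) c K eK by (simp add: t_def l0_def)
    then have "mix n e \<le> nat \<lceil>2 * t + K / l0\<rceil>" using P.mix_index_le e by simp
    moreover have "0 \<le> 2 * t + K / l0" using elim(3) K l0 by (simp add: t_def)
    ultimately have "real (mix n e) < 2 * t + K / l0 + 1" by linarith
    then have "real (mix n e) * l \<le> (2 * t + K / l0 + 1) * l" using l by simp
    also have "\<dots> = 2 * (t * l) + K * (l / l0) + l" using l0 by (simp add: algebra_simps)
    also have "\<dots> \<le> 2 * (t * l) + K + 2 * (t * l)"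
      using l0 K elim(3) l by (intro add_mono) (auto simp: t_def divide_le_eq mult_le_cancel_left1)
    finally have "real (mix n e) * l \<le> 4 * (t * l) + K" by (simp add: mult.commute)
    then show ?case using elim(4) max.cobounded1[of Z 0] unfolding t_def l_def by linarith
  qed
qed

subsection \<open>Width of the cutoff window\<close>

lemma mix_index_window:
  assumes cut: "cutoff_limits (\<lambda>n m. sqrt (D n m)) t" "\<And>n. 0 < t n"
    and c: "0 < c" and d: "0 < d" "d < e"
  shows "\<exists>C. eventually (\<lambda>n. (\<exists>m. sqrt (D n m) \<le> d) \<and> (\<exists>m. sqrt (D n m) \<le> e)
           \<and> \<bar>real (mix n d) - real (mix n e)\<bar> \<le> C * max 1 (1 / lam n c)) sequentially"
proof -
  define c1 where "c1 = min c (d\<^sup>2/3)"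
  have c1: "0 < c1" "c1 \<le> c" "c1 \<le> d\<^sup>2/3" using c d by (auto simp: c1_def)
  define L where "L = ln (3 * e\<^sup>2 / d\<^sup>2) / 2"
  define K where "K = max 0 (ln (3 * c / d\<^sup>2) / 2)"
  have e: "0 < e" using d by simp
  have "d\<^sup>2 < e\<^sup>2" using d by (simp add: power_strict_mono)
  then have "d\<^sup>2 < 3 * e\<^sup>2" using zero_le_power2[of e] by linarith
  then have L: "0 < L" using d by (simp add: L_def field_simps)
  have "exp (- (2 * L)) \<le> 1 / (3 * e\<^sup>2 / d\<^sup>2)"
    using d e by (intro exp_minus_le_inverse) (auto simp: L_def)
  then have eL: "exp (- (2 * L)) * e\<^sup>2 \<le> d\<^sup>2/3" using e by (simp add: field_simps)
  have "exp (- (2 * K)) \<le> 1 / (3 * c / d\<^sup>2)"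
    using c d by (intro exp_minus_le_inverse) (auto simp: K_def)
  then have eK: "c * exp (- (2 * K)) \<le> d\<^sup>2/3" using c by (simp add: field_simps)
  have "eventually (\<lambda>n. K \<le> real (mix n e) * lam n c1) sequentially"
    using cutoff_imp_mix_rate(2)[OF cut c1(1) e] unfolding filterlim_at_top by blast
  with cutoff_imp_mix_rate(1)[OF cut c e] cutoff_imp_mix_rate(1)[OF cut c1(1) e]
  have "eventually (\<lambda>n. (\<exists>m. sqrt (D n m) \<le> d) \<and> (\<exists>m. sqrt (D n m) \<le> e)
      \<and> \<bar>real (mix n d) - real (mix n e)\<bar> \<le> (L + 1) * max 1 (1 / lam n c)) sequentially"
  proof eventually_elim
    case (elim n)
    define m k where "m = mix n e" and "k = nat \<lceil>L / lam n c\<rceil>"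
    have l: "0 < lam n c" using cut_rate_pos elim by blast
    have Dm: "D n m \<le> e\<^sup>2" using elim P.dist_sq_mix_index P.sqrt_dist_sq_le_iff e by (auto simp: m_def)
    have "c * b n (J n c1) ^ (2*m) = c * exp (- (2 * (lam n c1 * m)))"
      using cut_modulus_pow elim by simp
    also have "\<dots> \<le> c * exp (- (2 * K))" using elim(3) c by (simp add: m_def mult.commute)
    finally have mid: "c * b n (J n c1) ^ (2*m) \<le> d\<^sup>2/3" using eK by linarith
    have "L / lam n c \<le> real k" unfolding k_def by linarith
    then have "L \<le> lam n c * k" using l by (simp add: divide_le_eq mult.commute)
    then have "b n (J n c) ^ (2*k) \<le> exp (- (2 * L))"
      using cut_modulus_pow[of "N n" "b n" "w n" c k] elim by simp
    then have "b n (J n c) ^ (2*k) * D n m \<le> exp (- (2 * L)) * e\<^sup>2"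
      using Dm P.dist_sq_nonneg by (intro mult_mono) auto
    then have "D n (m + k) \<le> d\<^sup>2"
      using P.dist_sq_shift_le[of n c c1 m k] elim c1 mid eL by (auto simp: nondegenerate_def)
    then have exd: "\<exists>m. sqrt (D n m) \<le> d" and mix_d: "mix n d \<le> m + k" and mix_e: "m \<le> mix n d"
      using P.sqrt_dist_sq_le_iff P.mix_index_le P.mix_index_antimono d by (auto simp: m_def)
    have "0 \<le> L / lam n c" using L l by simp
    then have "real k \<le> L * (1 / lam n c) + 1" unfolding k_def by simp
    moreover have "L * (1 / lam n c) \<le> L * max 1 (1 / lam n c)" using L by (intro mult_left_mono) auto
    ultimately have "real k \<le> (L + 1) * max 1 (1 / lam n c)" by (simp add: algebra_simps)
    then show ?case using exd elim mix_d mix_e by (simp add: m_def)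
  qed
  then show ?thesis by blast
qed

lemma mix_index_cut_time_window:
  assumes sharp: "\<And>c. 0 < c \<Longrightarrow> sharp c" and c: "0 < c" and e: "0 < e"
  shows "\<exists>C. eventually (\<lambda>n. (\<exists>m. sqrt (D n m) \<le> e)
           \<and> \<bar>real (mix n e) - tau n c\<bar> \<le> C * max 1 (sqrt (tau n c / lam n c))) sequentially"
proof -
  define c1 where "c1 = min c (e\<^sup>2/3)"
  have c1: "0 < c1" "c1 \<le> c" "c1 \<le> e\<^sup>2/3" using c e by (auto simp: c1_def)
  define A where "A = max 1 ((1 + ln (3 / e\<^sup>2)) / 2)"
  define K where "K = max 0 (ln (3 * c / e\<^sup>2) / 2)"
  define L where "L = max 0 (ln (e\<^sup>2 * (1 + c) / c) / 2)"
  have A: "1 \<le> A" by (simp add: A_def)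
  have "(1 + ln (3 / e\<^sup>2)) / 2 \<le> A" by (simp add: A_def)
  then have "exp (- (2 * A - 1)) \<le> 1 / (3 / e\<^sup>2)" using e by (intro exp_minus_le_inverse) auto
  then have eA: "exp (1 - 2 * A) \<le> e\<^sup>2/3" by simp
  have "exp (- (2 * K)) \<le> 1 / (3 * c / e\<^sup>2)"
    using c e by (intro exp_minus_le_inverse) (auto simp: K_def)
  then have eK: "c * exp (- (2 * K)) \<le> e\<^sup>2/3" using c by (simp add: field_simps)
  have "eventually (\<lambda>n. K \<le> tau n c1 * lam n c1) sequentially"
    "eventually (\<lambda>n. 1 \<le> tau n c * lam n c) sequentially"
    using sharp[OF c1(1)] sharp[OF c] unfolding filterlim_at_top by blast+
  with conjunct1[OF sharp[OF c]] conjunct1[OF sharp[OF c1(1)]]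
    eventually_cut_time_eq[OF c1(1,2) sharp[OF c1(1)]]
  have "eventually (\<lambda>n. (\<exists>m. sqrt (D n m) \<le> e)
      \<and> \<bar>real (mix n e) - tau n c\<bar> \<le> max (A + 1) L * max 1 (sqrt (tau n c / lam n c))) sequentially"
  proof eventually_elim
    case (elim n)
    define q where "q = sqrt (tau n c / lam n c)"
    have "0 < tau n c"
      using elim(5) cut_rate_pos[OF elim(1)] zero_less_mult_pos2[of "tau n c" "lam n c"] by simp
    then have q0: "0 \<le> q" using cut_rate_pos[OF elim(1)] by (simp add: q_def)
    have "c * exp (- 2 * lam n c1 * tau n c) \<le> c * exp (- (2 * K))"
      using elim c by (simp add: mult.commute)
    then have "c1 + c * exp (- 2 * lam n c1 * tau n c) + exp (1 - 2 * A) \<le> e\<^sup>2"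
      using c1 eK eA by linarith
    note up = P.mix_index_after_cut_time[OF elim(1) elim(2) c1(1,2) e elim(5) A this]
    have lo: "tau n c - mix n e \<le> L * q"
      using P.cut_time_minus_mix_index[OF elim(1) c e up(1) elim(5)] by (simp add: L_def q_def)
    have "A * q \<le> A * max 1 q" using A by (intro mult_left_mono) auto
    then have "real (mix n e) - tau n c \<le> (A + 1) * max 1 q"
      using up(2) by (simp add: q_def algebra_simps)
    moreover have "L * q \<le> max (A + 1) L * max 1 q" using q0 by (intro mult_mono) (auto simp: L_def)
    moreover have "(A + 1) * max 1 q \<le> max (A + 1) L * max 1 q" by (intro mult_right_mono) auto
    ultimately show ?case using lo up(1) P.sqrt_dist_sq_le_iff e by (auto simp: q_def)
  qed
  then show ?thesis by blast
qed

abbreviation "Te n e \<equiv> mixing_time (N n) (b n) (w n) e"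
abbreviation "taue n c \<equiv> ecut_time (N n) (b n) (w n) c"
abbreviation "lame n c \<equiv> ecut_rate (N n) (b n) (w n) c"
abbreviation "cutoff \<equiv> has_L2_cutoff (\<lambda>n m. sqrt (D n m))"

lemma tendsto_PInfty_iff_eventually_eq:
  assumes "eventually (\<lambda>n. f n = ereal (g n)) sequentially"
  shows "(f \<longlongrightarrow> \<infinity>) sequentially \<longleftrightarrow> filterlim g at_top sequentially"
  using tendsto_cong[OF assms] tendsto_PInfty_eq_at_top by metis

lemma eventually_nondegenerate_of_tendsto:
  assumes c: "0 < c" and lim: "((\<lambda>n. X n * lame n c) \<longlongrightarrow> \<infinity>) sequentially"
  shows "eventually (\<lambda>n. good n c) sequentially"
proof -
  have "eventually (\<lambda>n. ereal 0 < X n * lame n c) sequentially" using lim by (simp add: tendsto_PInfty)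
  with eventually_cut_index[OF c] show ?thesis
  proof eventually_elim
    case (elim n)
    show ?case
    proof (rule ccontr)
      assume "\<not> good n c"
      then have "lame n c = 0" using P.ecut_rate_eq_0 elim(1) c by simp
      then show False using elim(2) by simp
    qed
  qed
qed

lemma eventually_mix_exists:
  assumes e: "0 < e" "4 * ct \<le> e\<^sup>2" and ct: "0 < ct" and good: "eventually (\<lambda>n. good n ct) sequentially"
  shows "eventually (\<lambda>n. \<exists>m. sqrt (D n m) \<le> e) sequentially"
proof -
  define K where "K = max 1 (ln (4 / e\<^sup>2) / 2)"
  have "exp (- (2 * K)) \<le> 1 / (4 / e\<^sup>2)" using e by (intro exp_minus_le_inverse) (auto simp: K_def)
  then have eK: "2 * ct + 2 * exp (- 2 * K) \<le> e\<^sup>2" using e by simp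
  have K: "0 < K" by (simp add: K_def)
  from good show ?thesis
  proof eventually_elim
    case (elim n)
    have "D n (nat \<lceil>2 * tau n ct + K / lam n ct\<rceil>) \<le> e\<^sup>2"
      using P.dist_sq_beyond_twice_cut_time[OF elim ct K] eK by linarith
    then have "sqrt (D n (nat \<lceil>2 * tau n ct + K / lam n ct\<rceil>)) \<le> e"
      using e by (simp add: P.sqrt_dist_sq_le_iff)
    then show ?case by blast
  qed
qed

lemma cutoff_imp_emix_rate:
  assumes cut: cutoff and e: "0 < e" and c: "0 < c"
  shows "((\<lambda>n. Te n e * lame n c) \<longlongrightarrow> \<infinity>) sequentially"
proof -
  obtain t where t: "cutoff_limits (\<lambda>n m. sqrt (D n m)) t" "\<And>n. 0 < t n"
    using cut by (auto simp: has_L2_cutoff_def is_cutoff_time_def)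
  have "eventually (\<lambda>n. Te n e * lame n c = ereal (real (mix n e) * lam n c)) sequentially"
    using cutoff_imp_mix_rate(1)[OF t c e] by eventually_elim (simp add: mixing_time_def P.ecut_rate_eq)
  then show ?thesis
    using cutoff_imp_mix_rate(2)[OF t c e] by (simp add: tendsto_PInfty_iff_eventually_eq)
qed

lemma cutoff_imp_sharp:
  assumes cut: cutoff and c: "0 < c" shows "sharp c"
proof -
  obtain t where t: "cutoff_limits (\<lambda>n m. sqrt (D n m)) t" "\<And>n. 0 < t n"
    using cut by (auto simp: has_L2_cutoff_def is_cutoff_time_def)
  have e: "0 < 2 * sqrt c" "4 * c \<le> (2 * sqrt c)\<^sup>2" using c by (auto simp: power_mult_distrib)
  have good: "eventually (\<lambda>n. good n c) sequentially"
    using cutoff_imp_mix_rate(1)[OF t c e(1)] by (auto elim: eventually_mono)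
  show ?thesis
    using good mix_rate_imp_time_rate[OF c order_refl e good cutoff_imp_mix_rate(2)[OF t c e(1)]]
      by simp
qed

lemma sharp_imp_cutoff_time:
  assumes ct: "0 < ct" and sharp: "\<And>c. 0 < c \<Longrightarrow> c \<le> ct \<Longrightarrow> sharp c"
  shows "\<exists>t. is_cutoff_time (\<lambda>n m. sqrt (D n m)) t
           \<and> eventually (\<lambda>n. taue n ct = ereal (t n)) sequentially"
proof -
  define t where "t n = (if 0 < tau n ct then tau n ct else 1)" for n
  have "eventually (\<lambda>n. 0 < tau n ct * lam n ct) sequentially"
    using sharp[OF ct order_refl] unfolding filterlim_at_top_dense by blast
  with conjunct1[OF sharp[OF ct order_refl]]
  have ev: "eventually (\<lambda>n. good n ct \<and> 0 < tau n ct) sequentially"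
    by eventually_elim (use cut_rate_pos zero_less_mult_pos2 in blast)
  have "eventually (\<lambda>n. tau n ct = t n) sequentially" using ev by eventually_elim (simp add: t_def)
  then have "cutoff_limits (\<lambda>n m. sqrt (D n m)) t"
    by (rule cutoff_limits_cong[OF _ sharp_imp_cutoff_limits[OF ct sharp]])
  moreover have "eventually (\<lambda>n. taue n ct = ereal (t n)) sequentially"
    using ev by eventually_elim (simp add: P.ecut_time_eq ct t_def)
  moreover have "\<forall>n. 0 < t n" by (simp add: t_def)
  ultimately show ?thesis unfolding is_cutoff_time_def by blast
qed

lemma sharp_of_etime_rate:
  assumes c: "0 < c" "c \<le> ct" and lim: "((\<lambda>n. taue n ct * lame n c) \<longlongrightarrow> \<infinity>) sequentially"
  shows "sharp c"
proof -
  have ct: "0 < ct" using c by simp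
  have good: "eventually (\<lambda>n. good n c) sequentially"
    using eventually_nondegenerate_of_tendsto[OF c(1) lim] .
  note up = eventually_nondegenerate_mono[OF good c]
  have "eventually (\<lambda>n. taue n ct * lame n c = ereal (tau n ct * lam n c)) sequentially"
    using good up by eventually_elim (simp add: P.ecut_time_eq ct P.ecut_rate_eq)
  then have "filterlim (\<lambda>n. tau n ct * lam n c) at_top sequentially"
    using lim by (simp add: tendsto_PInfty_iff_eventually_eq)
  then show ?thesis using good time_rate_antimono[OF c good] by simp
qed

lemma cutoff_imp_etime_rate:
  assumes cut: cutoff and ct: "0 < ct" and c: "0 < c"
  shows "((\<lambda>n. taue n ct * lame n c) \<longlongrightarrow> \<infinity>) sequentially"
proof -
  have sc: "sharp c" and sct: "sharp ct" using cutoff_imp_sharp cut c ct by auto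
  have "filterlim (\<lambda>n. tau n ct * lam n c) at_top sequentially"
  proof (cases "c \<le> ct")
    case True
    obtain t where t: "cutoff_limits (\<lambda>n m. sqrt (D n m)) t" "\<And>n. 0 < t n"
      using cut by (auto simp: has_L2_cutoff_def is_cutoff_time_def)
    have e: "0 < 2 * sqrt ct" "4 * ct \<le> (2 * sqrt ct)\<^sup>2" using ct by (auto simp: power_mult_distrib)
    show ?thesis
      using mix_rate_imp_time_rate[OF c True e conjunct1[OF sc] cutoff_imp_mix_rate(2)[OF t c e(1)]] .
  next
    case False
    then show ?thesis using time_rate_antimono[of ct c c] ct sc by simp
  qed
  moreover have "eventually (\<lambda>n. taue n ct * lame n c = ereal (tau n ct * lam n c)) sequentially"
    using conjunct1[OF sc] conjunct1[OF sct]
      by eventually_elim (simp add: P.ecut_time_eq ct P.ecut_rate_eq)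
  ultimately show ?thesis by (simp add: tendsto_PInfty_iff_eventually_eq)
qed

lemma emix_rate_imp_cutoff:
  assumes e: "0 < e" and lim: "\<And>c. 0 < c \<Longrightarrow> ((\<lambda>n. Te n e * lame n c) \<longlongrightarrow> \<infinity>) sequentially"
  shows cutoff
proof -
  define ct where "ct = e\<^sup>2/4"
  have ct: "0 < ct" "4 * ct \<le> e\<^sup>2" using e by (auto simp: ct_def)
  have mix_ev: "eventually (\<lambda>n. \<exists>m. sqrt (D n m) \<le> e) sequentially"
    using eventually_mix_exists[OF e(1) ct(2) ct(1)
        eventually_nondegenerate_of_tendsto[OF ct(1) lim[OF ct(1)]]] .
  have "sharp c" if c: "0 < c" "c \<le> ct" for c
  proof -
    have good: "eventually (\<lambda>n. good n c) sequentially"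
      using eventually_nondegenerate_of_tendsto[OF c(1) lim[OF c(1)]] .
    have "eventually (\<lambda>n. Te n e * lame n c = ereal (real (mix n e) * lam n c)) sequentially"
      using good mix_ev by eventually_elim (simp add: mixing_time_def P.ecut_rate_eq)
    then have "filterlim (\<lambda>n. real (mix n e) * lam n c) at_top sequentially"
      using lim[OF c(1)] by (simp add: tendsto_PInfty_iff_eventually_eq)
    from mix_rate_imp_time_rate[OF c e ct(2) good this]
    show "sharp c" using good time_rate_antimono[OF c good] by simp
  qed
  then show ?thesis using sharp_imp_cutoff_time[OF ct(1)] unfolding has_L2_cutoff_def by blast
qed

lemma etime_rate_imp_cutoff:
  assumes ct: "0 < ct" and lim: "\<And>c. 0 < c \<Longrightarrow> c \<le> ct \<Longrightarrow> ((\<lambda>n. taue n ct * lame n c) \<longlongrightarrow> \<infinity>) sequentially"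
  shows cutoff
  using sharp_imp_cutoff_time[OF ct sharp_of_etime_rate[OF _ _ lim]] unfolding has_L2_cutoff_def
    by blast

lemma diagonal_etime_rate_imp_cutoff:
  assumes lim: "\<And>c. 0 < c \<Longrightarrow> ((\<lambda>n. taue n c * lame n c) \<longlongrightarrow> \<infinity>) sequentially"
  shows cutoff
proof -
  have "sharp c" if "0 < c" "c \<le> 1" for c
    using sharp_of_etime_rate[OF that(1) order_refl lim[OF that(1)]] .
  then show ?thesis using sharp_imp_cutoff_time[of 1] unfolding has_L2_cutoff_def by auto
qed

lemma max_one_inverse_ereal: "0 < l \<Longrightarrow> max 1 (1 / ereal l) = ereal (max 1 (1 / l))"
  by (simp add: one_ereal_def max_def)

lemma max_one_esqrt_ereal: "0 < l \<Longrightarrow> max 1 (esqrt (ereal t / ereal l)) = ereal (max 1 (sqrt (t / l)))"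
  by (simp add: esqrt_def one_ereal_def max_def)

lemma cutoff_imp_emix_window:
  assumes cut: cutoff and e: "0 < e" and d: "0 < d" and c: "0 < c"
  shows "\<exists>C. \<forall>\<^sub>F n in sequentially. \<bar>Te n e - Te n d\<bar> \<le> ereal C * max 1 (1 / lame n c)"
proof -
  obtain t where t: "cutoff_limits (\<lambda>n m. sqrt (D n m)) t" "\<And>n. 0 < t n"
    using cut by (auto simp: has_L2_cutoff_def is_cutoff_time_def)
  have "\<exists>C. eventually (\<lambda>n. (\<exists>m. sqrt (D n m) \<le> d) \<and> (\<exists>m. sqrt (D n m) \<le> e)
      \<and> \<bar>real (mix n d) - real (mix n e)\<bar> \<le> C * max 1 (1 / lam n c)) sequentially"
  proof (cases d e rule: linorder_cases)
    case less
    show ?thesis using mix_index_window[OF t c d less] .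
  next
    case equal then show ?thesis
      using cutoff_imp_mix_rate(1)[OF t c e] by (intro exI[of _ 0]) (auto elim: eventually_mono)
  next
    case greater
    then obtain C where "eventually (\<lambda>n. (\<exists>m. sqrt (D n m) \<le> e) \<and> (\<exists>m. sqrt (D n m) \<le> d)
        \<and> \<bar>real (mix n e) - real (mix n d)\<bar> \<le> C * max 1 (1 / lam n c)) sequentially"
      using mix_index_window[OF t c e] by blast
    then show ?thesis by (intro exI[of _ C]) (auto simp: abs_minus_commute elim: eventually_mono)
  qed
  then obtain C where C: "eventually (\<lambda>n. (\<exists>m. sqrt (D n m) \<le> d) \<and> (\<exists>m. sqrt (D n m) \<le> e)
      \<and> \<bar>real (mix n d) - real (mix n e)\<bar> \<le> C * max 1 (1 / lam n c)) sequentially" by blast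
  have "\<forall>\<^sub>F n in sequentially. \<bar>Te n e - Te n d\<bar> \<le> ereal C * max 1 (1 / lame n c)"
    using C cutoff_imp_mix_rate(1)[OF t c e]
  proof eventually_elim
    case (elim n)
    have Te: "Te n e = ereal (real (mix n e))" "Te n d = ereal (real (mix n d))"
      using elim by (auto simp: mixing_time_def)
    have l: "lame n c = ereal (lam n c)" "0 < lam n c" using elim P.ecut_rate_eq cut_rate_pos by blast+
    show ?case
      unfolding Te l(1) max_one_inverse_ereal[OF l(2)] ereal_minus(1) abs_ereal.simps(1)
        times_ereal.simps(1) ereal_less_eq(3)
      using elim by (simp add: abs_minus_commute)
  qed
  then show ?thesis by blast
qed

lemma cutoff_imp_emix_cut_time_window:
  assumes cut: cutoff and e: "0 < e" and c: "0 < c"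
  shows "\<exists>C. \<forall>\<^sub>F n in sequentially. \<bar>Te n e - taue n c\<bar> \<le> ereal C * max 1 (esqrt (taue n c / lame n c))"
proof -
  obtain C where C: "eventually (\<lambda>n. (\<exists>m. sqrt (D n m) \<le> e)
      \<and> \<bar>real (mix n e) - tau n c\<bar> \<le> C * max 1 (sqrt (tau n c / lam n c))) sequentially"
    using mix_index_cut_time_window[OF cutoff_imp_sharp[OF cut] c e] by blast
  have "\<forall>\<^sub>F n in sequentially. \<bar>Te n e - taue n c\<bar> \<le> ereal C * max 1 (esqrt (taue n c / lame n c))"
    using C conjunct1[OF cutoff_imp_sharp[OF cut c]]
  proof eventually_elim
    case (elim n)
    have Te: "Te n e = ereal (real (mix n e))" using elim by (auto simp: mixing_time_def)
    have t: "taue n c = ereal (tau n c)" using elim P.ecut_time_eq c by blast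
    have l: "lame n c = ereal (lam n c)" "0 < lam n c" using elim P.ecut_rate_eq cut_rate_pos by blast+
    show ?case
      unfolding Te t l(1) max_one_esqrt_ereal[OF l(2)] ereal_minus(1) abs_ereal.simps(1)
        times_ereal.simps(1) ereal_less_eq(3)
      using elim by simp
  qed
  then show ?thesis by blast
qed

theorem cutoff_characterization:
  "(cutoff \<longleftrightarrow> (\<forall>eps>0. \<forall>c>0. (\<lambda>n. Te n eps * lame n c) \<longlonglongrightarrow> \<infinity>))
   \<and> (cutoff \<longleftrightarrow> (\<exists>eps>0. \<forall>c>0. (\<lambda>n. Te n eps * lame n c) \<longlonglongrightarrow> \<infinity>))
   \<and> (cutoff \<longleftrightarrow> (\<forall>c>0. (\<lambda>n. taue n c * lame n c) \<longlonglongrightarrow> \<infinity>))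
   \<and> (cutoff \<longleftrightarrow> (\<forall>ct>0. \<forall>c>0. (\<lambda>n. taue n ct * lame n c) \<longlonglongrightarrow> \<infinity>))
   \<and> (cutoff \<longleftrightarrow> (\<exists>ct>0. \<forall>c>0. (\<lambda>n. taue n ct * lame n c) \<longlonglongrightarrow> \<infinity>))
   \<and> (cutoff \<longrightarrow>
        (\<forall>c>0. \<exists>t. is_cutoff_time (\<lambda>n m. sqrt (D n m)) t
           \<and> (\<forall>\<^sub>F n in sequentially. taue n c = ereal (t n)))
      \<and> (\<forall>eps>0. \<forall>delta>0. \<forall>c>0. \<exists>C::real. \<forall>\<^sub>F n in sequentially.
            \<bar>Te n eps - Te n delta\<bar> \<le> ereal C * max 1 (1 / lame n c))
      \<and> (\<forall>eps>0. \<forall>c>0. \<exists>C::real. \<forall>\<^sub>F n in sequentially.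
            \<bar>Te n eps - taue n c\<bar> \<le> ereal C * max 1 (esqrt (taue n c / lame n c))))"
proof (intro conjI impI iffI)
  show "\<forall>eps>0. \<forall>c>0. (\<lambda>n. Te n eps * lame n c) \<longlonglongrightarrow> \<infinity>" if cutoff
    using that by (auto intro!: cutoff_imp_emix_rate)
  show "\<exists>eps>0. \<forall>c>0. (\<lambda>n. Te n eps * lame n c) \<longlonglongrightarrow> \<infinity>" if cutoff
    using that by (auto intro!: exI[of _ 1] cutoff_imp_emix_rate)
  show "\<forall>c>0. (\<lambda>n. taue n c * lame n c) \<longlonglongrightarrow> \<infinity>"
    and "\<forall>ct>0. \<forall>c>0. (\<lambda>n. taue n ct * lame n c) \<longlonglongrightarrow> \<infinity>" if cutoff
    using that by (auto intro!: cutoff_imp_etime_rate)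
  show "\<exists>ct>0. \<forall>c>0. (\<lambda>n. taue n ct * lame n c) \<longlonglongrightarrow> \<infinity>" if cutoff
    using that by (auto intro!: exI[of _ 1] cutoff_imp_etime_rate)
  show cutoff if "\<forall>eps>0. \<forall>c>0. (\<lambda>n. Te n eps * lame n c) \<longlonglongrightarrow> \<infinity>"
    using that by (intro emix_rate_imp_cutoff[of 1]) auto
  show cutoff if "\<exists>eps>0. \<forall>c>0. (\<lambda>n. Te n eps * lame n c) \<longlonglongrightarrow> \<infinity>"
    using that emix_rate_imp_cutoff by blast
  show cutoff if "\<forall>c>0. (\<lambda>n. taue n c * lame n c) \<longlonglongrightarrow> \<infinity>"
    using that by (intro diagonal_etime_rate_imp_cutoff) auto
  show cutoff if "\<forall>ct>0. \<forall>c>0. (\<lambda>n. taue n ct * lame n c) \<longlonglongrightarrow> \<infinity>"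
    using that by (intro diagonal_etime_rate_imp_cutoff) auto
  show cutoff if "\<exists>ct>0. \<forall>c>0. (\<lambda>n. taue n ct * lame n c) \<longlonglongrightarrow> \<infinity>"
    using that etime_rate_imp_cutoff by blast
  assume cut: cutoff
  show "\<forall>c>0. \<exists>t. is_cutoff_time (\<lambda>n m. sqrt (D n m)) t
      \<and> (\<forall>\<^sub>F n in sequentially. taue n c = ereal (t n))"
    using sharp_imp_cutoff_time cutoff_imp_sharp[OF cut] by blast
  show "\<forall>eps>0. \<forall>delta>0. \<forall>c>0. \<exists>C::real. \<forall>\<^sub>F n in sequentially.
      \<bar>Te n eps - Te n delta\<bar> \<le> ereal C * max 1 (1 / lame n c)"
    using cutoff_imp_emix_window[OF cut] by blast
  show "\<forall>eps>0. \<forall>c>0. \<exists>C::real. \<forall>\<^sub>F n in sequentially.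
      \<bar>Te n eps - taue n c\<bar> \<le> ereal C * max 1 (esqrt (taue n c / lame n c))"
    using cutoff_imp_emix_cut_time_window[OF cut] by blast
qed

end

theorem theorem3p3:
  fixes S :: "nat \<Rightarrow> 'a set"
    and K :: "nat \<Rightarrow> 'a \<Rightarrow> 'a \<Rightarrow> real"
    and pp :: "nat \<Rightarrow> 'a \<Rightarrow> real"
    and mu :: "nat \<Rightarrow> 'a \<Rightarrow> real"
    and beta :: "nat \<Rightarrow> nat \<Rightarrow> real"
    and phi :: "nat \<Rightarrow> nat \<Rightarrow> 'a \<Rightarrow> real"
    and d :: "nat \<Rightarrow> nat \<Rightarrow> real"
    and T :: "nat \<Rightarrow> real \<Rightarrow> ereal"
    and tau :: "nat \<Rightarrow> real \<Rightarrow> ereal"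
    and lam :: "nat \<Rightarrow> real \<Rightarrow> ereal"
  defines "d \<equiv> \<lambda>n m. d2 (S n) (K n) (pp n) (mu n) m"
    and "T \<equiv> \<lambda>n eps. T2 (S n) (K n) (pp n) (mu n) eps"
    and "tau \<equiv> \<lambda>n c. taun (S n) (beta n) (mu n) (phi n) c"
    and "lam \<equiv> \<lambda>n c. eig_rate (beta n (jn (S n) (mu n) (phi n) c))"
  assumes chain: "\<And>n. irred_reversible_chain (S n) (K n) (pp n)"
    and init: "\<And>n. is_prob (S n) (mu n)"
    and eig: "\<And>n. ordered_eigenbasis (S n) (K n) (pp n) (beta n) (phi n)"
    and grow: "(\<exists>eps0>0. (\<lambda>n. T n eps0) \<longlonglongrightarrow> \<infinity>) \<or> (\<exists>c>0. (\<lambda>n. tau n c) \<longlonglongrightarrow> \<infinity>)"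
    and norm: "filterlim (\<lambda>n. one_step_norm (S n) (K n) (pp n) (mu n)) at_top sequentially"
  shows
    "(has_L2_cutoff d \<longleftrightarrow>
        (\<forall>eps>0. \<forall>c>0. (\<lambda>n. T n eps * lam n c) \<longlonglongrightarrow> \<infinity>))
   \<and> (has_L2_cutoff d \<longleftrightarrow>
        (\<exists>eps>0. \<forall>c>0. (\<lambda>n. T n eps * lam n c) \<longlonglongrightarrow> \<infinity>))
   \<and> (has_L2_cutoff d \<longleftrightarrow>
        (\<forall>c>0. (\<lambda>n. tau n c * lam n c) \<longlonglongrightarrow> \<infinity>))
   \<and> (has_L2_cutoff d \<longleftrightarrow>
        (\<forall>ct>0. \<forall>c>0. (\<lambda>n. tau n ct * lam n c) \<longlonglongrightarrow> \<infinity>))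
   \<and> (has_L2_cutoff d \<longleftrightarrow>
        (\<exists>ct>0. \<forall>c>0. (\<lambda>n. tau n ct * lam n c) \<longlonglongrightarrow> \<infinity>))
   \<and> (has_L2_cutoff d \<longrightarrow>
        (\<forall>c>0. \<exists>t. is_cutoff_time d t \<and> (\<forall>\<^sub>F n in sequentially. tau n c = ereal (t n)))
      \<and> (\<forall>eps>0. \<forall>delta>0. \<forall>c>0. \<exists>C::real. \<forall>\<^sub>F n in sequentially.
            \<bar>T n eps - T n delta\<bar> \<le> ereal C * max 1 (1 / lam n c))
      \<and> (\<forall>eps>0. \<forall>c>0. \<exists>C::real. \<forall>\<^sub>F n in sequentially.
            \<bar>T n eps - tau n c\<bar> \<le> ereal C * max 1 (esqrt (tau n c / lam n c))))"
proof -
  define N b w where "N = (\<lambda>n. card (S n))" and "b = (\<lambda>n i. \<bar>beta n i\<bar>)"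
    and "w = (\<lambda>n i. (coef (S n) (mu n) (phi n i))\<^sup>2)"
  interpret C: spectral_chain "S n" "K n" "pp n" "mu n" "beta n" "phi n" for n
    using chain init eig by unfold_locales
  have "filterlim (\<lambda>n. 1 + dist_sq (N n) (b n) (w n) 1) at_top sequentially"
    using norm C.one_step_norm_eq by (simp add: N_def b_def w_def)
  then have "filterlim (\<lambda>n. -1 + (1 + dist_sq (N n) (b n) (w n) 1)) at_top sequentially"
    by (rule filterlim_tendsto_add_at_top[OF tendsto_const])
  then have "filterlim (\<lambda>n. dist_sq (N n) (b n) (w n) 1) at_top sequentially" by simp
  then interpret F: profile_family N b w
    by (intro profile_family.intro) (simp_all add: C.spectral_profile N_def b_def w_def)
  have eqs: "d = (\<lambda>n m. sqrt (F.D n m))" "T = F.Te" "tau = F.taue" "lam = F.lame"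
    unfolding d_def T_def tau_def lam_def N_def b_def w_def
    by (simp_all add: C.d2_eq_sqrt_dist_sq C.T2_eq_mixing_time taun_eq_ecut_time jn_eq_cut_index
        ecut_rate_def eig_rate_abs)
  show ?thesis unfolding eqs by (rule F.cutoff_characterization)
qed

end
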